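(* Let $d\in\mathbb{N}$, $I_d\subseteq\{1,\ldots,d\}$, and let $n\in\mathbb{N}$ be prime. Then for every generating vector $\mathbf{z}=(z_1,\ldots,z_d)\in\mathbb{Z}_n^d:=\{0,1,\ldots,n-1\}^d$ the mean squared worst case error of the shifted rank-$1$ lattice rules $Q_{d,n}(\mathbf{z})+\boldsymbol{\Delta}$ with respect to all shifts $\boldsymbol{\Delta}\in[0,1)^d$ satisfies $$E(Q_{d,n}(\mathbf{z}))^2=\beta_0^d\sum_{\ell=1}^d B_{I_d,\ell}(z_1,\ldots,z_\ell),$$ where for $\ell=1,\ldots,d$ $$B_{I_d,\ell}(z_1,\ldots,z_\ell):=\sum_{\substack{\mathfrak{u}\subseteq\{1,\ldots,\ell\},\\ \ell\in\mathfrak{u}}} c_{\mathfrak{u},I_d}^{-1}\sum_{\mathbf{h}_{\mathfrak{u}}\in(\mathbb{Z}\setminus\{0\})^{\mathfrak{u}}}\frac{\mathbb{M}_{\mathfrak{u},I_d}(\mathbf{h}_{\mathfrak{u}})!}{\#\mathcal{S}_{\mathfrak{u},I_d}}\, r_{\alpha,\boldsymbol{\beta}}^{-1}(\mathbf{h}_{\mathfrak{u}})\,\mathbf{1}\{\mathbf{h}_{\mathfrak{u}}\in L(\mathbf{z}_{\mathfrak{u}},n)^{\perp}\}$$ and $c_{\mathfrak{u},I_d}:=\beta_0^{\#\mathfrak{u}}\binom{\#I_d}{\#(I_d\cap\mathfrak{u})}$.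
   Context: Standing setting. $R\colon[1,\infty)\to(0,\infty)$ is a function such that $\frac{1}{c_R}R(m)\le \frac{R(nm)}{n}\le R(m)$ for all $n,m\in\mathbb{N}$ with some constant $c_R\ge 1$, and $\mu_R(\alpha):=\sum_{m=1}^\infty R(m)^{-2\alpha}<\infty$ for the smoothness parameter $\alpha\ge 0$ (these imply $\alpha>1/2$). $\boldsymbol{\beta}=(\beta_0,\beta_1)$ are positive parameters. For a nonempty finite index set $\mathfrak{u}$ and $\mathbf{k}\in\mathbb{Z}^{\mathfrak{u}}$ put $r_{\alpha,\boldsymbol{\beta}}(\mathbf{k}):=\prod_{\ell\in\mathfrak{u}}\big(\delta_{0,k_\ell}\beta_0^{-1}+(1-\delta_{0,k_\ell})\beta_1^{-1}R(|k_\ell|)^{2\alpha}\big)$. The space $F_d(r_{\alpha,\boldsymbol{\beta}})$ consists of all $f\in L_2([0,1]^d)$ (complex valued) with $\|f\|^2:=\sum_{\mathbf{k}\in\mathbb{Z}^d}|\hat f(\mathbf{k})|^2 r_{\alpha,\boldsymbol{\beta}}(\mathbf{k})<\infty$, where $\hat f(\mathbf{k})=\int_{[0,1]^d}f(\mathbf{x})e^{-2\pi i\mathbf{k}\cdot\mathbf{x}}\,d\mathbf{x}$; it is a reproducing kernel Hilbert space. Permutation invariance. For $I_d\subseteq\{1,\ldots,d\}$ let $\mathcal{S}_d$ be the set of bijections $P$ of $\{1,\ldots,d\}$ with $P(j)=j$ for all $j\notin I_d$, and write $P(\mathbf{x}):=(x_{P(1)},\ldots,x_{P(d)})$. The subspace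 $\mathfrak{S}_{I_d}(F_d(r_{\alpha,\boldsymbol{\beta}}))$ consists of all $f\in F_d(r_{\alpha,\boldsymbol{\beta}})$ with $f(\mathbf{x})=f(P(\mathbf{x}))$ for all $\mathbf{x}\in[0,1]^d$, $P\in\mathcal{S}_d$, with the same norm. For nonempty $\mathfrak{u}\subseteq\{1,\ldots,d\}$ let $\mathcal{S}_{\mathfrak{u},I_d}$ be the set of bijections $P$ of $\mathfrak{u}$ with $P(j)=j$ for $j\in\mathfrak{u}\setminus I_d$, and for $\mathbf{h}_{\mathfrak{u}}\in\mathbb{Z}^{\mathfrak{u}}$ let $\mathbb{M}_{\mathfrak{u},I_d}(\mathbf{h}_{\mathfrak{u}})!:=\#\{P\in\mathcal{S}_{\mathfrak{u},I_d}: P(\mathbf{h}_{\mathfrak{u}})=\mathbf{h}_{\mathfrak{u}}\}$. For $\mathbf{h}\in\mathbb{Z}^d$, $\mathbf{h}_{\mathfrak{u}}=(h_j)_{j\in\mathfrak{u}}$ denotes the restriction. Lattice rules. For prime $n$ and $\mathbf{z}\in\mathbb{Z}_n^d$, the shifted rank-1 lattice rule $Q_{d,n}(\mathbf{z})+\boldsymbol{\Delta}$, $\boldsymbol{\Delta}\in[0,1)^d$, is $f\mapsto\frac1n\sum_{j=0}^{n-1}f(\{j\mathbf{z}/n+\boldsymbol{\Delta}\})$, with $\{\cdot\}$ the componentwise fractional part. For $\mathfrak{u}$ nonempty, $L(\mathbf{z}_{\mathfrak{u}},n)^\perp:=\{\mathbf{h}_{\mathfrak{u}}\in\mathbb{Z}^{\mathfrak{u}}:\mathbf{h}_{\mathfrak{u}}\cdot\mathbf{z}_{\mathfrak{u}}\equiv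 0\pmod n\}$. The worst case error of a cubature rule $Q$ on a normed space $H$ of functions is $e^{\mathrm{wor}}(Q;H):=\sup_{\|f\|_H\le1}|\int_{[0,1]^d}f-Q(f)|$, and $E(Q_{d,n}(\mathbf{z})):=\big(\int_{[0,1)^d}e^{\mathrm{wor}}(Q_{d,n}(\mathbf{z})+\boldsymbol{\Delta};\mathfrak{S}_{I_d}(F_d(r_{\alpha,\boldsymbol{\beta}})))^2\,d\boldsymbol{\Delta}\big)^{1/2}$. *)

theory Defs
  imports "HOL-Analysis.Analysis"
begin

text \<open>Points of [0,1]^d are extensional functions on the index set {1..d}.\<close>

definition cube :: "nat \<Rightarrow> (nat \<Rightarrow> real) measure" where
  "cube d = PiM {1..d} (\<lambda>_. restrict_space lborel {0..1})"

definition shift_cube :: "nat \<Rightarrow> (nat \<Rightarrow> real) measure" where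
  "shift_cube d = PiM {1..d} (\<lambda>_. restrict_space lborel {0..<1})"

definition Zd :: "nat \<Rightarrow> (nat \<Rightarrow> int) set" where
  "Zd d = {k. \<forall>j. j \<notin> {1..d} \<longrightarrow> k j = 0}"

definition dotp :: "nat \<Rightarrow> (nat \<Rightarrow> int) \<Rightarrow> (nat \<Rightarrow> real) \<Rightarrow> real" where
  "dotp d k x = (\<Sum>j\<in>{1..d}. real_of_int (k j) * x j)"

definition fourier_coeff :: "nat \<Rightarrow> ((nat \<Rightarrow> real) \<Rightarrow> complex) \<Rightarrow> (nat \<Rightarrow> int) \<Rightarrow> complex" where
  "fourier_coeff d f k =
     (LINT x|cube d. f x * exp (- (2 * of_real pi * \<i>) * of_real (dotp d k x)))"

definition r_ab :: "(real \<Rightarrow> real) \<Rightarrow> real \<Rightarrow> real \<Rightarrow> real \<Rightarrow> nat set \<Rightarrow> (nat \<Rightarrow> int) \<Rightarrow> real" where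
  "r_ab R \<alpha> \<beta>0 \<beta>1 u k =
     (\<Prod>l\<in>u. (if k l = 0 then 1 / \<beta>0 else R (real_of_int \<bar>k l\<bar>) powr (2 * \<alpha>) / \<beta>1))"

text \<open>The space F_d(r): square-integrable functions on [0,1]^d with finite weighted
  Fourier norm; as elements of the reproducing kernel Hilbert space they are identified
  with (pointwise equal to) their (absolutely convergent) Fourier series.\<close>
definition Fspace :: "(real \<Rightarrow> real) \<Rightarrow> real \<Rightarrow> real \<Rightarrow> real \<Rightarrow> nat \<Rightarrow> ((nat \<Rightarrow> real) \<Rightarrow> complex) set" where
  "Fspace R \<alpha> \<beta>0 \<beta>1 d = {f.
     f \<in> borel_measurable (cube d) \<and>
     integrable (cube d) (\<lambda>x. (cmod (f x))^2) \<and>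
     (\<lambda>k. (cmod (fourier_coeff d f k))^2 * r_ab R \<alpha> \<beta>0 \<beta>1 {1..d} k) summable_on Zd d \<and>
     (\<forall>x\<in>space (cube d).
        ((\<lambda>k. fourier_coeff d f k * exp (2 * of_real pi * \<i> * of_real (dotp d k x))) has_sum f x) (Zd d))}"

definition Fnorm :: "(real \<Rightarrow> real) \<Rightarrow> real \<Rightarrow> real \<Rightarrow> real \<Rightarrow> nat \<Rightarrow> ((nat \<Rightarrow> real) \<Rightarrow> complex) \<Rightarrow> real" where
  "Fnorm R \<alpha> \<beta>0 \<beta>1 d f =
     sqrt (\<Sum>\<^sub>\<infinity>k\<in>Zd d. (cmod (fourier_coeff d f k))^2 * r_ab R \<alpha> \<beta>0 \<beta>1 {1..d} k)"

definition Sym_space :: "(real \<Rightarrow> real) \<Rightarrow> real \<Rightarrow> real \<Rightarrow> real \<Rightarrow> nat \<Rightarrow> nat set \<Rightarrow> ((nat \<Rightarrow> real) \<Rightarrow> complex) set" where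
  "Sym_space R \<alpha> \<beta>0 \<beta>1 d I = {f \<in> Fspace R \<alpha> \<beta>0 \<beta>1 d.
     \<forall>x\<in>space (cube d). \<forall>P. P permutes I \<longrightarrow> f x = f (\<lambda>i. x (P i))}"

definition lattice_rule :: "nat \<Rightarrow> nat \<Rightarrow> (nat \<Rightarrow> int) \<Rightarrow> (nat \<Rightarrow> real) \<Rightarrow> ((nat \<Rightarrow> real) \<Rightarrow> complex) \<Rightarrow> complex" where
  "lattice_rule d n z \<Delta> f =
     of_real (1 / real n) *
     (\<Sum>j<n. f (restrict (\<lambda>i. frac (real j * real_of_int (z i) / real n + \<Delta> i)) {1..d}))"

definition wce :: "(real \<Rightarrow> real) \<Rightarrow> real \<Rightarrow> real \<Rightarrow> real \<Rightarrow> nat \<Rightarrow> nat set \<Rightarrow> nat \<Rightarrow> (nat \<Rightarrow> int) \<Rightarrow> (nat \<Rightarrow> real) \<Rightarrow> real" where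
  "wce R \<alpha> \<beta>0 \<beta>1 d I n z \<Delta> =
     Sup ((\<lambda>f. cmod ((LINT x|cube d. f x) - lattice_rule d n z \<Delta> f)) `
          {f \<in> Sym_space R \<alpha> \<beta>0 \<beta>1 d I. Fnorm R \<alpha> \<beta>0 \<beta>1 d f \<le> 1})"

definition rms_wce :: "(real \<Rightarrow> real) \<Rightarrow> real \<Rightarrow> real \<Rightarrow> real \<Rightarrow> nat \<Rightarrow> nat set \<Rightarrow> nat \<Rightarrow> (nat \<Rightarrow> int) \<Rightarrow> real" where
  "rms_wce R \<alpha> \<beta>0 \<beta>1 d I n z =
     sqrt (LINT \<Delta>|shift_cube d. (wce R \<alpha> \<beta>0 \<beta>1 d I n z \<Delta>)^2)"

definition Sperm :: "nat set \<Rightarrow> nat set \<Rightarrow> (nat \<Rightarrow> nat) set" where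
  "Sperm u I = {P. P permutes (u \<inter> I)}"

text \<open>M_{u,I_d}(h)!: number of P in S_{u,I_d} with P(h_u) = h_u.\<close>
definition Mfact :: "nat set \<Rightarrow> nat set \<Rightarrow> (nat \<Rightarrow> int) \<Rightarrow> nat" where
  "Mfact u I h = card {P \<in> Sperm u I. \<forall>j\<in>u. h (P j) = h j}"

definition c_uI :: "real \<Rightarrow> nat set \<Rightarrow> nat set \<Rightarrow> real" where
  "c_uI \<beta>0 u I = \<beta>0 ^ card u * real (card I choose card (I \<inter> u))"

definition nonzero_vecs :: "nat set \<Rightarrow> (nat \<Rightarrow> int) set" where
  "nonzero_vecs u = {h. (\<forall>j\<in>u. h j \<noteq> 0) \<and> (\<forall>j. j \<notin> u \<longrightarrow> h j = 0)}"

definition in_dual :: "nat \<Rightarrow> (nat \<Rightarrow> int) \<Rightarrow> nat set \<Rightarrow> (nat \<Rightarrow> int) \<Rightarrow> bool" where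
  "in_dual n z u h = (int n dvd (\<Sum>j\<in>u. h j * z j))"

definition B_term :: "(real \<Rightarrow> real) \<Rightarrow> real \<Rightarrow> real \<Rightarrow> real \<Rightarrow> nat set \<Rightarrow> nat \<Rightarrow> nat \<Rightarrow> (nat \<Rightarrow> int) \<Rightarrow> real" where
  "B_term R \<alpha> \<beta>0 \<beta>1 I n l z =
     (\<Sum>u\<in>{u. u \<subseteq> {1..l} \<and> l \<in> u}.
        inverse (c_uI \<beta>0 u I) *
        (\<Sum>\<^sub>\<infinity>h\<in>nonzero_vecs u.
           real (Mfact u I h) / real (card (Sperm u I)) *
           inverse (r_ab R \<alpha> \<beta>0 \<beta>1 u h) *
           (if in_dual n z u h then 1 else 0)))"

end

theory Submission
  imports Defs "HOL-Probability.Probability"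
begin

text \<open>A lattice rule integrates a character e_k exactly iff k lies in the dual lattice, so the
  error of the shifted rule on f is minus the sum of f^(k) e_k(Delta) over the nonzero dual
  vectors k. For permutation invariant f the coefficients are invariant, and averaging over
  the symmetry group replaces e_k(Delta) by its symmetrisation w_k(Delta). Cauchy-Schwarz in the
  weighted l2 norm bounds the error by the square root of the sum of |w_k|^2 / r(k), with equality
  for the function whose coefficients are proportional to conj(w_k) / r(k). Integrating over the
  shift, orthogonality of the characters turns the mean of |w_k|^2 into a count of permutations:
  the proportion of the group mapping k into the dual lattice times the order of the stabiliser
  of k. Sorting the dual vectors by their support u, and the supports by their largest index,
  gives the terms B_l, once the stabiliser of k is factored into the stabiliser inside u and all
  permutations of the zero coordinates.\<close>

section \<open>Characters on the unit cube\<close>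

text \<open>Fourier coefficients are integrals over the closed cube, the shifts range over the
  half-open one; the two differ by a null set and are treated together.\<close>

definition unit_interval :: "real set \<Rightarrow> bool" where
  "unit_interval S \<longleftrightarrow> S = {0..1} \<or> S = {0..<1}"

definition unit_cube :: "real set \<Rightarrow> nat \<Rightarrow> (nat \<Rightarrow> real) measure" where
  "unit_cube S d = PiM {1..d} (\<lambda>_. restrict_space lborel S)"

lemma cube_eq_unit_cube: "cube d = unit_cube {0..1} d"
  by (simp add: cube_def unit_cube_def)

lemma shift_cube_eq_unit_cube: "shift_cube d = unit_cube {0..<1} d"
  by (simp add: shift_cube_def unit_cube_def)

lemma unit_interval_closed [simp]: "unit_interval {0..1}"
  and unit_interval_half_open [simp]: "unit_interval {0..<1}"
  by (simp_all add: unit_interval_def)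

lemma prob_space_unit_interval:
  "unit_interval S \<Longrightarrow> prob_space (restrict_space lborel S)"
  by (intro prob_spaceI) (auto simp: unit_interval_def space_restrict_space emeasure_restrict_space)

lemma prob_space_unit_cube: "unit_interval S \<Longrightarrow> prob_space (unit_cube S d)"
  unfolding unit_cube_def by (intro prob_space_PiM prob_space_unit_interval)

lemma space_unit_cube: "space (unit_cube S d) = PiE {1..d} (\<lambda>_. S)"
  by (simp add: unit_cube_def space_PiM space_restrict_space)

lemma integral_unit_interval:
  fixes f :: "real \<Rightarrow> complex"
  assumes "unit_interval S"
  shows "(LINT t|restrict_space lborel S. f t) = (LBINT t=ereal 0..ereal 1. f t)"
proof -
  have "(LINT t|restrict_space lborel S. f t) = (LINT t:S|lborel. f t)"
    using assms by (auto simp: unit_interval_def integral_restrict_space set_lebesgue_integral_def)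
  also have "\<dots> = (LINT t:{0..1}|lborel. f t)"
    using assms by (auto simp: unit_interval_def intro!: set_integral_discrete_difference[where X="{1}"])
  also have "\<dots> = (LBINT t=ereal 0..ereal 1. f t)"
    by (rule interval_integral_Icc[symmetric]) simp
  finally show ?thesis .
qed

lemma integral_cis_unit_interval:
  fixes m :: int
  assumes "unit_interval S"
  shows "(LINT t|restrict_space lborel S. cis (2*pi*(of_int m * t))) = (if m = 0 then 1 else 0)"
proof -
  define c where "c = 2 * pi * \<i> * of_int m"
  define G where "G w = (if m = 0 then w else exp (c * w) / c)" for w
  have "(LBINT t=ereal 0..ereal 1. exp (c * of_real t)) = G (of_real 1) - G (of_real 0)"
  proof (rule interval_integral_FTC_finite)
    show "continuous_on {min 0 1..max 0 1} (\<lambda>t. exp (c * of_real t))"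
      by (intro continuous_intros)
    fix x :: real
    have "(G has_field_derivative exp (c * of_real x)) (at (of_real x))"
      unfolding G_def c_def
      by (cases "m = 0") (auto intro!: derivative_eq_intros simp: field_simps)
    then show "((\<lambda>t. G (of_real t)) has_vector_derivative exp (c * of_real x))
        (at x within {min 0 1..max 0 1})"
      by (rule has_vector_derivative_real_field)
  qed
  moreover have "G (of_real 1) - G (of_real 0) = (if m = 0 then 1 else 0)"
    by (simp add: G_def c_def exp_eq_1)
  moreover have "cis (2*pi*(of_int m * t)) = exp (c * of_real t)" for t
    by (simp add: cis_conv_exp c_def mult_ac)
  ultimately show ?thesis
    using integral_unit_interval[OF assms] by simp
qed

definition fourier_char :: "nat \<Rightarrow> (nat \<Rightarrow> int) \<Rightarrow> (nat \<Rightarrow> real) \<Rightarrow> complex" where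
  "fourier_char d k x = exp (2 * of_real pi * \<i> * of_real (dotp d k x))"

lemma fourier_char_prod:
  "fourier_char d k x = (\<Prod>j\<in>{1..d}. cis (2*pi*(of_int (k j) * x j)))"
  unfolding fourier_char_def dotp_def
  by (simp add: cis_conv_exp sum_distrib_left exp_sum[symmetric] mult_ac)

lemma norm_fourier_char [simp]: "norm (fourier_char d k x) = 1"
  by (simp add: fourier_char_def norm_exp_i_times[of "2 * pi * dotp d k x", simplified mult_ac] mult_ac)

lemma fourier_char_zero: "fourier_char d (\<lambda>_. 0) x = 1"
  by (simp add: fourier_char_def dotp_def)

lemma cnj_fourier_char: "cnj (fourier_char d k x) = exp (- (2 * of_real pi * \<i>) * of_real (dotp d k x))"
  by (simp add: fourier_char_def exp_cnj)

lemma cnj_fourier_char_uminus: "cnj (fourier_char d k x) = fourier_char d (\<lambda>j. - k j) x"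
  by (simp add: fourier_char_def exp_cnj dotp_def sum_negf)

lemma fourier_char_mult_cnj:
  "fourier_char d k x * cnj (fourier_char d k' x) = fourier_char d (\<lambda>j. k j - k' j) x"
  by (simp add: fourier_char_def exp_cnj dotp_def sum_subtractf algebra_simps exp_diff exp_minus field_simps)

lemma fourier_char_measurable [measurable]: "fourier_char d k \<in> borel_measurable (unit_cube S d)"
proof -
  have "(\<lambda>x. \<Prod>j\<in>{1..d}. cis (2*pi*(of_int (k j) * x j))) \<in> borel_measurable (unit_cube S d)"
  proof (rule borel_measurable_prod)
    fix j assume "j \<in> {1..d}"
    then have "(\<lambda>x. x j) \<in> measurable (unit_cube S d) (restrict_space lborel S)"
      unfolding unit_cube_def by (rule measurable_component_singleton)
    moreover have "(\<lambda>t::real. cis (2*pi*(of_int (k j) * t))) \<in> borel_measurable (restrict_space lborel S)"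
      by (auto intro!: borel_measurable_continuous_onI continuous_intros measurable_restrict_space1)
    ultimately show "(\<lambda>x. cis (2*pi*(of_int (k j) * x j))) \<in> borel_measurable (unit_cube S d)"
      by (rule measurable_compose)
  qed
  then show ?thesis by (simp add: fourier_char_prod[abs_def])
qed

lemma cnj_fourier_char_measurable [measurable]:
  "(\<lambda>x. cnj (fourier_char d k x)) \<in> borel_measurable (unit_cube S d)"
  by (simp add: cnj_fourier_char_uminus)

lemma integral_fourier_char:
  assumes S: "unit_interval S"
  shows "(LINT x|unit_cube S d. fourier_char d k x) = (if \<forall>j\<in>{1..d}. k j = 0 then 1 else 0)"
proof -
  interpret product_sigma_finite "\<lambda>_. restrict_space lborel S"
    unfolding product_sigma_finite_def
    using prob_space_unit_interval[OF S] by (simp add: prob_space_imp_sigma_finite)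
  interpret prob_space "restrict_space lborel S" by (rule prob_space_unit_interval[OF S])
  have "(LINT x|unit_cube S d. fourier_char d k x) =
        (\<Prod>j\<in>{1..d}. LINT t|restrict_space lborel S. cis (2*pi*(of_int (k j) * t)))"
    unfolding fourier_char_prod unit_cube_def
    by (rule product_integral_prod[where f="\<lambda>j t. cis (2*pi*(of_int (k j) * t))"])
       (auto intro!: integrable_const_bound[where B=1] borel_measurable_continuous_onI
         continuous_intros measurable_restrict_space1)
  also have "\<dots> = (\<Prod>j\<in>{1..d}. if k j = 0 then 1 else 0)"
    by (simp add: integral_cis_unit_interval[OF S])
  also have "\<dots> = (if \<forall>j\<in>{1..d}. k j = 0 then 1 else 0)"
    by (simp add: prod.neutral)
  finally show ?thesis .
qed

lemma fourier_char_orthonormal: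
  assumes "unit_interval S" "k \<in> Zd d" "k' \<in> Zd d"
  shows "(LINT x|unit_cube S d. fourier_char d k x * cnj (fourier_char d k' x)) =
    (if k = k' then 1 else 0)"
proof -
  have "(\<forall>j\<in>{1..d}. k j - k' j = 0) \<longleftrightarrow> k = k'"
    using assms(2,3) by (auto simp: Zd_def fun_eq_iff)
  then show ?thesis
    by (simp add: fourier_char_mult_cnj integral_fourier_char[OF assms(1)])
qed

section \<open>Sums and integrals\<close>

lemma has_sum_sum:
  fixes f :: "'j \<Rightarrow> 'k \<Rightarrow> 'b::topological_comm_monoid_add"
  assumes "finite J" "\<And>j. j \<in> J \<Longrightarrow> (f j has_sum s j) A"
  shows "((\<lambda>k. \<Sum>j\<in>J. f j k) has_sum (\<Sum>j\<in>J. s j)) A"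
  using assms by (induction J rule: finite_induct) (auto intro: has_sum_add)

lemma
  fixes f :: "'a \<Rightarrow> 'b::{topological_semigroup_mult,field,semiring_0,t2_space}"
  assumes "f summable_on A"
  shows summable_on_divide_const: "(\<lambda>x. f x / c) summable_on A"
    and infsum_divide_const: "infsum (\<lambda>x. f x / c) A = infsum f A / c"
  using has_sum_divide_const[where S="infsum f A" and c=c] assms by (auto simp: has_sum_iff)

lemma has_sum_suminf_of_norm_summable:
  fixes f :: "nat \<Rightarrow> 'a::banach"
  assumes "summable (\<lambda>i. norm (f i))"
  shows "(f has_sum suminf f) UNIV"
  using norm_summable_imp_has_sum[OF assms summable_sums[OF summable_norm_cancel[OF assms]]] .

lemma
  fixes F :: "nat \<Rightarrow> 'a \<Rightarrow> 'b::{banach,second_countable_topology}"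
  assumes fm: "finite_measure M"
    and meas: "\<And>i. F i \<in> borel_measurable M"
    and bnd: "\<And>i x. x \<in> space M \<Longrightarrow> norm (F i x) \<le> b i"
    and bs: "summable b"
  shows integrable_suminf_dominated: "integrable M (\<lambda>x. \<Sum>i. F i x)"
    and integral_suminf_dominated: "(LINT x|M. (\<Sum>i. F i x)) = (\<Sum>i. LINT x|M. F i x)"
    and summable_norm_integral_dominated: "summable (\<lambda>i. norm (LINT x|M. F i x))"
proof -
  interpret finite_measure M by (rule fm)
  have intF: "integrable M (F i)" for i
    by (intro integrable_const_bound[where B="b i"]) (auto intro: meas bnd)
  have "(LINT x|M. norm (F i x)) \<le> (LINT x|M. b i)" for i
    by (intro integral_mono intF integrable_norm) (auto intro: bnd)
  then have "(LINT x|M. norm (F i x)) \<le> b i * measure M (space M)" for i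
    by (simp add: mult.commute)
  then have sum_int: "summable (\<lambda>i. LINT x|M. norm (F i x))"
    by (intro summable_comparison_test'[OF summable_mult2[OF bs]]) (simp add: integral_nonneg_AE)
  have ae: "AE x in M. summable (\<lambda>i. norm (F i x))"
    by (intro AE_I2 summable_comparison_test'[OF bs]) (use bnd in auto)
  show "integrable M (\<lambda>x. \<Sum>i. F i x)"
    by (rule integrable_suminf[OF intF ae sum_int])
  show "(LINT x|M. (\<Sum>i. F i x)) = (\<Sum>i. LINT x|M. F i x)"
    by (rule integral_suminf[OF intF ae sum_int])
  show "summable (\<lambda>i. norm (LINT x|M. F i x))"
    by (rule summable_comparison_test'[OF sum_int]) (simp add: integral_norm_bound)
qed

lemma
  fixes F :: "'k \<Rightarrow> 'a \<Rightarrow> 'b::{banach,second_countable_topology}" and b :: "'k \<Rightarrow> real"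
  assumes A: "countable A" and fm: "finite_measure M"
    and meas: "\<And>k. k \<in> A \<Longrightarrow> F k \<in> borel_measurable M"
    and bnd: "\<And>k x. k \<in> A \<Longrightarrow> x \<in> space M \<Longrightarrow> norm (F k x) \<le> b k"
    and bs: "b summable_on A"
  shows integrable_infsum: "integrable M (\<lambda>x. infsum (\<lambda>k. F k x) A)"
    and integral_infsum: "(LINT x|M. infsum (\<lambda>k. F k x) A) = infsum (\<lambda>k. LINT x|M. F k x) A"
proof -
  interpret finite_measure M by (rule fm)
  have "integrable M (\<lambda>x. infsum (\<lambda>k. F k x) A) \<and>
        (LINT x|M. infsum (\<lambda>k. F k x) A) = infsum (\<lambda>k. LINT x|M. F k x) A"
  proof (cases "finite A")
    case True
    have "integrable M (F k)" if "k \<in> A" for k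
      using that by (intro integrable_const_bound[where B="b k"]) (auto intro: meas bnd)
    with True show ?thesis by (auto simp: integral_sum)
  next
    case False
    define g where "g = from_nat_into A"
    have bij: "bij_betw g UNIV A" using bij_betw_from_nat_into[OF A False] g_def by simp
    then have gA: "g i \<in> A" for i using bij_betwE by blast
    have bsg: "summable (\<lambda>i. b (g i))"
      using bs summable_on_reindex_bij_betw[OF bij] summable_on_imp_summable by blast
    note dominated = integrable_suminf_dominated integral_suminf_dominated
      summable_norm_integral_dominated
    note dominated = dominated[OF fm meas[OF gA] bnd[OF gA] bsg]
    have pointwise: "infsum (\<lambda>k. F k x) A = (\<Sum>i. F (g i) x)" if "x \<in> space M" for x
    proof -
      have "summable (\<lambda>i. norm (F (g i) x))"
        by (rule summable_comparison_test'[OF bsg]) (use gA bnd that in auto)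
      from infsumI[OF has_sum_suminf_of_norm_summable[OF this]] show ?thesis
        using infsum_reindex_bij_betw[OF bij, of "\<lambda>k. F k x"] by simp
    qed
    have "infsum (\<lambda>k. LINT x|M. F k x) A = (\<Sum>i. LINT x|M. F (g i) x)"
      using infsumI[OF has_sum_suminf_of_norm_summable[OF dominated(3)]]
        infsum_reindex_bij_betw[OF bij, of "\<lambda>k. LINT x|M. F k x"] by simp
    moreover have "integrable M (\<lambda>x. infsum (\<lambda>k. F k x) A) \<longleftrightarrow>
        integrable M (\<lambda>x. \<Sum>i. F (g i) x)"
      by (rule Bochner_Integration.integrable_cong) (simp_all add: pointwise)
    moreover have "(LINT x|M. infsum (\<lambda>k. F k x) A) = (LINT x|M. (\<Sum>i. F (g i) x))"
      by (rule Bochner_Integration.integral_cong) (simp_all add: pointwise)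
    ultimately show ?thesis using dominated(1,2) by simp
  qed
  then show "integrable M (\<lambda>x. infsum (\<lambda>k. F k x) A)"
    "(LINT x|M. infsum (\<lambda>k. F k x) A) = infsum (\<lambda>k. LINT x|M. F k x) A" by auto
qed

lemma mult_le_weighted_amgm:
  fixes x y r l :: real
  assumes "r > 0" "l > 0"
  shows "x * y \<le> (l * x^2 * r + y^2 / (l * r)) / 2"
proof -
  have "0 \<le> (l * r * x - y)^2" by simp
  then have "2 * (l * r) * (x * y) \<le> (l * r) * (l * x^2 * r) + y^2"
    by (simp add: power2_eq_square algebra_simps)
  then show ?thesis using assms by (simp add: field_simps)
qed

lemma abs_summable_of_weighted_square:
  fixes c :: "'a \<Rightarrow> complex"
  assumes r: "\<And>k. k \<in> A \<Longrightarrow> r k > 0"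
    and cs: "(\<lambda>k. (cmod (c k))^2 * r k) summable_on A"
    and rs: "(\<lambda>k. 1 / r k) summable_on A"
  shows "(\<lambda>k. norm (c k)) summable_on A"
proof (rule summable_on_comparison_test)
  show "(\<lambda>k. ((cmod (c k))^2 * r k + 1 / r k) / 2) summable_on A"
    by (intro summable_on_divide_const summable_on_add cs rs)
  show "norm (c k) \<le> ((cmod (c k))^2 * r k + 1 / r k) / 2" if "k \<in> A" for k
    using mult_le_weighted_amgm[of "r k" 1 "cmod (c k)" 1] r[OF that] by simp
qed simp

lemma norm_infsum_mult_le_amgm:
  fixes c w :: "'a \<Rightarrow> complex"
  assumes r: "\<And>k. k \<in> A \<Longrightarrow> r k > 0" and l: "l > 0"
    and cs: "(\<lambda>k. (cmod (c k))^2 * r k) summable_on A"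
    and ws: "(\<lambda>k. (cmod (w k))^2 / r k) summable_on A"
  shows "norm (infsum (\<lambda>k. c k * w k) A) \<le>
      (l * infsum (\<lambda>k. (cmod (c k))^2 * r k) A + infsum (\<lambda>k. (cmod (w k))^2 / r k) A / l) / 2"
proof -
  define b where "b k = (l * ((cmod (c k))^2 * r k) + (cmod (w k))^2 / r k / l) / 2" for k
  have bnd: "norm (c k * w k) \<le> b k" if "k \<in> A" for k
    using mult_le_weighted_amgm[OF r[OF that] l, of "cmod (c k)" "cmod (w k)"]
    by (simp add: b_def norm_mult mult_ac)
  have sc: "(\<lambda>k. l * ((cmod (c k))^2 * r k)) summable_on A"
    by (rule summable_on_cmult_right[OF cs])
  have sw: "(\<lambda>k. (cmod (w k))^2 / r k / l) summable_on A"
    by (rule summable_on_divide_const[OF ws])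
  have sb: "b summable_on A"
    unfolding b_def by (intro summable_on_divide_const summable_on_add sc sw)
  have as: "(\<lambda>k. norm (c k * w k)) summable_on A"
    by (rule summable_on_comparison_test[OF sb]) (use bnd in auto)
  have "norm (infsum (\<lambda>k. c k * w k) A) \<le> infsum (\<lambda>k. norm (c k * w k)) A"
    by (rule norm_infsum_bound[OF as])
  also have "\<dots> \<le> infsum b A"
    by (rule infsum_mono[OF as sb]) (use bnd in auto)
  also have "\<dots> = (l * infsum (\<lambda>k. (cmod (c k))^2 * r k) A + infsum (\<lambda>k. (cmod (w k))^2 / r k) A / l) / 2"
    unfolding b_def infsum_divide_const[OF summable_on_add[OF sc sw]] infsum_add[OF sc sw]
      infsum_cmult_right[OF cs] infsum_divide_const[OF ws] ..
  finally show ?thesis .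
qed

lemma weighted_cauchy_schwarz_infsum:
  fixes c w :: "'a \<Rightarrow> complex"
  assumes r: "\<And>k. k \<in> A \<Longrightarrow> r k > 0"
    and cs: "(\<lambda>k. (cmod (c k))^2 * r k) summable_on A"
    and c1: "infsum (\<lambda>k. (cmod (c k))^2 * r k) A \<le> 1"
    and ws: "(\<lambda>k. (cmod (w k))^2 / r k) summable_on A"
  shows "norm (infsum (\<lambda>k. c k * w k) A) \<le> sqrt (infsum (\<lambda>k. (cmod (w k))^2 / r k) A)"
proof -
  define W where "W = infsum (\<lambda>k. (cmod (w k))^2 / r k) A"
  have W0: "W \<ge> 0" unfolding W_def by (intro infsum_nonneg) (simp add: less_imp_le r)
  show ?thesis
  proof (cases "W = 0")
    case True
    have "w k = 0" if k: "k \<in> A" for k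
    proof -
      have "(cmod (w k))^2 / r k = 0"
        by (rule nonneg_infsum_le_0D[OF _ ws _ k]) (use True r in \<open>auto simp: W_def less_imp_le\<close>)
      then show ?thesis using r[OF k] by simp
    qed
    then show ?thesis by (simp add: infsum_cong[where g="\<lambda>_. 0"])
  next
    case False
    define l where "l = sqrt W"
    have l: "l > 0" "l * l = W" using False W0 by (simp_all add: l_def)
    have "norm (infsum (\<lambda>k. c k * w k) A) \<le> (l * infsum (\<lambda>k. (cmod (c k))^2 * r k) A + W / l) / 2"
      unfolding W_def by (rule norm_infsum_mult_le_amgm[OF r l(1) cs ws])
    also have "\<dots> \<le> (l + W / l) / 2"
      using c1 l by simp
    also have "\<dots> = l" using l by (simp add: field_simps)
    finally show ?thesis by (simp add: l_def W_def)
  qed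
qed

lemma sum_roots_of_unity_powers:
  fixes m :: int
  assumes n: "n > 0"
  shows "(\<Sum>j<n. exp (2 * of_real pi * \<i> * of_real (real j * real_of_int m / real n))) =
         (if int n dvd m then of_nat n else 0)"
proof -
  define q where "q = exp (2 * of_real pi * \<i> * of_real (real_of_int m / real n))"
  have powers: "exp (2 * of_real pi * \<i> * of_real (real j * real_of_int m / real n)) = q ^ j" for j
    unfolding q_def exp_of_nat_mult[symmetric] by (simp add: mult_ac)
  have q1: "q = 1 \<longleftrightarrow> int n dvd m"
  proof
    assume "q = 1"
    then obtain l :: int where "2 * pi * (real_of_int m / real n) = of_int (2 * l) * pi"
      unfolding q_def exp_eq_1 by auto
    then have "real_of_int m = real_of_int l * real n" using n by (simp add: field_simps)
    then have "m = l * int n" by (metis of_int_eq_iff of_int_mult of_int_of_nat_eq)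
    then show "int n dvd m" by simp
  next
    assume "int n dvd m"
    then obtain l where "m = int n * l" by blast
    then show "q = 1" unfolding q_def exp_eq_1 using n
      by (auto intro!: exI[of _ l] simp: field_simps)
  qed
  have "q ^ n = 1"
    unfolding q_def exp_of_nat_mult[symmetric] exp_eq_1 using n by (auto intro!: exI[of _ m])
  moreover have "(\<Sum>j<n. exp (2 * of_real pi * \<i> * of_real (real j * real_of_int m / real n))) =
      (\<Sum>j<n. q ^ j)"
    by (simp only: powers)
  ultimately show ?thesis
    using q1 by (cases "q = 1") (simp_all add: geometric_sum)
qed

section \<open>Absolutely convergent Fourier series\<close>

lemma Zd_eq_extensional_image:
  "Zd d = (\<lambda>g j. if j \<in> {1..d} then g j else 0) ` PiE {1..d} (\<lambda>_. UNIV)"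
proof (intro set_eqI iffI)
  fix k assume "k \<in> Zd d"
  then show "k \<in> (\<lambda>g j. if j \<in> {1..d} then g j else 0) ` PiE {1..d} (\<lambda>_. UNIV)"
    by (intro image_eqI[of _ _ "restrict k {1..d}"]) (auto simp: Zd_def fun_eq_iff)
qed (auto simp: Zd_def)

lemma bij_betw_extend_Zd:
  "bij_betw (\<lambda>g j. if j \<in> {1..d} then g j else 0) (PiE {1..d} (\<lambda>_. UNIV)) (Zd d)"
  unfolding bij_betw_def Zd_eq_extensional_image
  by (auto intro!: inj_onI simp: fun_eq_iff PiE_def extensional_def) metis

lemma countable_Zd: "countable (Zd d)"
  unfolding Zd_eq_extensional_image by (intro countable_image countable_PiE) auto

definition fourier_series :: "nat \<Rightarrow> ((nat \<Rightarrow> int) \<Rightarrow> complex) \<Rightarrow> (nat \<Rightarrow> real) \<Rightarrow> complex" where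
  "fourier_series d a x = infsum (\<lambda>k. a k * fourier_char d k x) (Zd d)"

lemma fourier_series_summable:
  assumes "(\<lambda>k. norm (a k)) summable_on Zd d"
  shows "(\<lambda>k. a k * fourier_char d k x) summable_on Zd d"
  by (rule abs_summable_summable) (use assms in \<open>simp add: norm_mult\<close>)

lemma norm_fourier_series_le:
  assumes "(\<lambda>k. norm (a k)) summable_on Zd d"
  shows "norm (fourier_series d a x) \<le> infsum (\<lambda>k. norm (a k)) (Zd d)"
  unfolding fourier_series_def
  using norm_infsum_bound[of "\<lambda>k. a k * fourier_char d k x" "Zd d"] assms by (simp add: norm_mult)

lemma
  assumes as: "(\<lambda>k. norm (a k)) summable_on Zd d" and S: "unit_interval S"
  shows integrable_fourier_series: "integrable (unit_cube S d) (fourier_series d a)"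
    and integral_fourier_series_mult_cnj:
      "k \<in> Zd d \<Longrightarrow> (LINT x|unit_cube S d. fourier_series d a x * cnj (fourier_char d k x)) = a k"
proof -
  interpret prob_space "unit_cube S d" by (rule prob_space_unit_cube[OF S])
  show "integrable (unit_cube S d) (fourier_series d a)"
    unfolding fourier_series_def[abs_def]
    by (rule integrable_infsum[where b="\<lambda>k. norm (a k)"])
       (use as countable_Zd in \<open>auto simp: norm_mult finite_measure_axioms\<close>)
  assume k: "k \<in> Zd d"
  have "(LINT x|unit_cube S d. fourier_series d a x * cnj (fourier_char d k x)) =
        (LINT x|unit_cube S d. infsum (\<lambda>k'. a k' * fourier_char d k' x * cnj (fourier_char d k x)) (Zd d))"
    unfolding fourier_series_def
    by (intro Bochner_Integration.integral_cong refl infsum_cmult_left[symmetric] fourier_series_summable as)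
  also have "\<dots> = infsum (\<lambda>k'. LINT x|unit_cube S d. a k' * fourier_char d k' x * cnj (fourier_char d k x)) (Zd d)"
    by (rule integral_infsum[where b="\<lambda>k. norm (a k)"])
       (use as countable_Zd in \<open>auto simp: norm_mult finite_measure_axioms\<close>)
  also have "\<dots> = infsum (\<lambda>k'. if k' = k then a k else 0) (Zd d)"
    by (intro infsum_cong) (simp add: mult.assoc fourier_char_orthonormal[OF S _ k])
  also have "\<dots> = a k"
    using infsum_cong_neutral[of "{k}" "Zd d" "\<lambda>_. a k" "\<lambda>k'. if k' = k then a k else 0"] k
    by auto
  finally show "(LINT x|unit_cube S d. fourier_series d a x * cnj (fourier_char d k x)) = a k" .
qed

lemma fourier_coeff_fourier_series:
  assumes "(\<lambda>k. norm (a k)) summable_on Zd d" "k \<in> Zd d"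
  shows "fourier_coeff d (fourier_series d a) k = a k"
  unfolding fourier_coeff_def cnj_fourier_char[symmetric] cube_eq_unit_cube
  using integral_fourier_series_mult_cnj[OF assms(1) _ assms(2)] by simp

section \<open>Permuting coordinates\<close>

lemma Zd_comp_permutes: "k \<in> Zd d \<Longrightarrow> P permutes {1..d} \<Longrightarrow> k \<circ> P \<in> Zd d"
  by (auto simp: Zd_def permutes_not_in)

lemma bij_betw_comp_permutes_Zd:
  assumes P: "P permutes {1..d}"
  shows "bij_betw (\<lambda>k. k \<circ> P) (Zd d) (Zd d)"
proof (rule bij_betwI[where g="\<lambda>k. k \<circ> inv P"])
  show "(\<lambda>k. k \<circ> P) \<in> Zd d \<rightarrow> Zd d" "(\<lambda>k. k \<circ> inv P) \<in> Zd d \<rightarrow> Zd d"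
    using Zd_comp_permutes P permutes_inv[OF P] by auto
qed (simp_all add: o_assoc[symmetric] permutes_inv_o[OF P])

lemma dotp_comp_permutes:
  "P permutes {1..d} \<Longrightarrow> dotp d (k \<circ> P) (\<lambda>i. x (P i)) = dotp d k x"
  unfolding dotp_def
  using sum.reindex_bij_betw[OF permutes_imp_bij, of P "{1..d}" "\<lambda>j. real_of_int (k j) * x j"]
  by simp

lemma fourier_char_comp_permutes:
  "P permutes {1..d} \<Longrightarrow> fourier_char d (k \<circ> P) (\<lambda>i. x (P i)) = fourier_char d k x"
  by (simp add: fourier_char_def dotp_comp_permutes)

lemma r_ab_comp_permutes: "P permutes u \<Longrightarrow> r_ab R \<alpha> \<beta>0 \<beta>1 u (k \<circ> P) = r_ab R \<alpha> \<beta>0 \<beta>1 u k"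
  unfolding r_ab_def comp_def
  using prod.reindex_bij_betw[OF permutes_imp_bij, of P u
      "\<lambda>l. if k l = 0 then 1 / \<beta>0 else R (real_of_int \<bar>k l\<bar>) powr (2 * \<alpha>) / \<beta>1"]
  by simp

lemma fourier_coeff_comp_permutes:
  assumes f: "f \<in> borel_measurable (cube d)" and P: "P permutes {1..d}"
    and sym: "\<And>x. x \<in> space (cube d) \<Longrightarrow> f (\<lambda>i. x (P i)) = f x"
  shows "fourier_coeff d f (k \<circ> P) = fourier_coeff d f k"
proof -
  define T where "T x = (\<lambda>i\<in>{1..d}. x (P i))" for x :: "nat \<Rightarrow> real"
  have T_meas: "T \<in> measurable (cube d) (cube d)"
    unfolding T_def cube_def
    by (intro measurable_restrict measurable_component_singleton) (use permutes_in_image[OF P] in auto)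
  have distr_T: "distr (cube d) (cube d) T = cube d"
    unfolding cube_def T_def
    using distr_PiM_reindex[of "{1..d}" "\<lambda>_. restrict_space lborel {0..1}" P "{1..d}"]
      prob_space_unit_interval[of "{0..1}"] permutes_inj_on[OF P] permutes_in_image[OF P]
    by auto
  have T_eq: "T x = (\<lambda>i. x (P i))" if "x \<in> space (cube d)" for x
    using that permutes_not_in[OF P]
    by (auto simp: T_def cube_eq_unit_cube space_unit_cube PiE_def extensional_def fun_eq_iff)
  have "fourier_coeff d f (k \<circ> P) = (LINT y|distr (cube d) (cube d) T. f y * cnj (fourier_char d (k \<circ> P) y))"
    by (simp add: fourier_coeff_def cnj_fourier_char distr_T)
  also have "\<dots> = (LINT x|cube d. f (T x) * cnj (fourier_char d (k \<circ> P) (T x)))"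
    using T_meas f by (intro integral_distr) (auto simp: cube_eq_unit_cube)
  also have "\<dots> = (LINT x|cube d. f x * cnj (fourier_char d k x))"
    by (intro Bochner_Integration.integral_cong refl)
       (simp add: T_eq sym fourier_char_comp_permutes[OF P])
  finally show ?thesis by (simp add: fourier_coeff_def cnj_fourier_char)
qed

lemma fourier_series_comp_permutes:
  assumes P: "P permutes {1..d}" and a: "\<And>k. a (k \<circ> P) = a k"
  shows "fourier_series d a (\<lambda>i. x (P i)) = fourier_series d a x"
proof -
  have "fourier_series d a (\<lambda>i. x (P i)) =
      infsum (\<lambda>k. a (k \<circ> P) * fourier_char d (k \<circ> P) (\<lambda>i. x (P i))) (Zd d)"
    unfolding fourier_series_def
    by (rule infsum_reindex_bij_betw[OF bij_betw_comp_permutes_Zd[OF P], symmetric])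
  then show ?thesis
    by (simp add: a fourier_char_comp_permutes[OF P] fourier_series_def)
qed

section \<open>Stabilisers of vectors under coordinate permutations\<close>

definition perm_stabiliser :: "'a set \<Rightarrow> ('a \<Rightarrow> 'b) \<Rightarrow> ('a \<Rightarrow> 'a) set" where
  "perm_stabiliser I k = {Q. Q permutes I \<and> k \<circ> Q = k}"

lemma card_perm_stabiliser_le: "finite I \<Longrightarrow> card (perm_stabiliser I k) \<le> fact (card I)"
  unfolding perm_stabiliser_def card_permutations[OF refl, symmetric]
  by (intro card_mono finite_permutations) auto

lemma card_perm_coset:
  assumes P: "P permutes I"
  shows "card {Q. Q permutes I \<and> k \<circ> Q = k \<circ> P} = card (perm_stabiliser I k)"
proof -
  have cancel: "h \<circ> P \<circ> inv P = h" for h :: "'a \<Rightarrow> 'c"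
    by (simp add: o_assoc[symmetric] permutes_inv_o[OF P])
  have "bij_betw (\<lambda>Q. Q \<circ> P) (perm_stabiliser I k) {Q. Q permutes I \<and> k \<circ> Q = k \<circ> P}"
  proof (rule bij_betwI[where g="\<lambda>Q. Q \<circ> inv P"])
    show "(\<lambda>Q. Q \<circ> P) \<in> perm_stabiliser I k \<rightarrow> {Q. Q permutes I \<and> k \<circ> Q = k \<circ> P}"
      using P by (auto simp: perm_stabiliser_def o_assoc intro: permutes_compose)
    show "(\<lambda>Q. Q \<circ> inv P) \<in> {Q. Q permutes I \<and> k \<circ> Q = k \<circ> P} \<rightarrow> perm_stabiliser I k"
      using P permutes_inv[OF P] cancel
      by (auto simp: perm_stabiliser_def o_assoc intro: permutes_compose)
  qed (simp_all add: o_assoc[symmetric] permutes_inv_o[OF P])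
  then show ?thesis by (simp add: bij_betw_same_card)
qed

lemma card_perm_stabiliser_comp:
  assumes P: "P permutes I"
  shows "card (perm_stabiliser I (k \<circ> P)) = card (perm_stabiliser I k)"
proof -
  have "bij_betw (\<lambda>Q. P \<circ> Q \<circ> inv P) (perm_stabiliser I (k \<circ> P)) (perm_stabiliser I k)"
  proof (rule bij_betwI[where g="\<lambda>Q. inv P \<circ> Q \<circ> P"])
    have "k \<circ> (P \<circ> Q \<circ> inv P) = k \<circ> P \<circ> Q \<circ> inv P" for Q by (simp add: o_assoc)
    moreover have "k \<circ> P \<circ> inv P = k" by (simp add: o_assoc[symmetric] permutes_inv_o[OF P])
    ultimately show "(\<lambda>Q. P \<circ> Q \<circ> inv P) \<in> perm_stabiliser I (k \<circ> P) \<rightarrow> perm_stabiliser I k"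
      using P permutes_inv[OF P]
      by (auto simp: perm_stabiliser_def permutes_inv_o intro!: permutes_compose)
    have "k \<circ> P \<circ> (inv P \<circ> Q \<circ> P) = k \<circ> (P \<circ> inv P) \<circ> Q \<circ> P" for Q by (simp add: o_assoc)
    then show "(\<lambda>Q. inv P \<circ> Q \<circ> P) \<in> perm_stabiliser I k \<rightarrow> perm_stabiliser I (k \<circ> P)"
      using P permutes_inv[OF P]
      by (auto simp: perm_stabiliser_def permutes_inv_o intro!: permutes_compose)
  qed (simp_all add: fun_eq_iff permutes_inverses[OF P])
  then show ?thesis by (simp add: bij_betw_same_card)
qed

lemma permutes_restrict_invariant:
  assumes "finite T" "Q permutes S" "T \<subseteq> S" "\<And>x. x \<in> T \<Longrightarrow> Q x \<in> T"
  shows "(\<lambda>x. if x \<in> T then Q x else x) permutes T"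
proof (rule bij_imp_permutes)
  have "inj_on Q T" using permutes_inj_on[OF assms(2)] .
  moreover have "Q ` T = T" using assms(1,4) \<open>inj_on Q T\<close> by (intro endo_inj_surj) auto
  ultimately show "bij_betw (\<lambda>x. if x \<in> T then Q x else x) T T"
    by (simp add: bij_betw_def inj_on_def)
qed auto

lemma perm_stabiliser_preserves_support:
  assumes "Q \<in> perm_stabiliser I k" "\<And>j. k j \<noteq> 0 \<longleftrightarrow> j \<in> u"
  shows "Q x \<in> u \<longleftrightarrow> x \<in> u"
  using assms(1) assms(2)[of x] assms(2)[of "Q x"] by (auto simp: perm_stabiliser_def fun_eq_iff)

lemma perm_stabiliser_restrict_support:
  fixes k :: "'a \<Rightarrow> 'b::zero"
  assumes I: "finite I" and Q: "Q \<in> perm_stabiliser I k" and supp: "\<And>j. k j \<noteq> 0 \<longleftrightarrow> j \<in> u"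
  shows "(\<lambda>x. if x \<in> u \<inter> I then Q x else x) permutes (u \<inter> I)"
    and "(\<lambda>x. if x \<in> I - u then Q x else x) permutes (I - u)"
proof -
  have QI: "Q permutes I" using Q by (simp add: perm_stabiliser_def)
  have inv: "Q x \<in> u \<longleftrightarrow> x \<in> u" "Q x \<in> I \<longleftrightarrow> x \<in> I" for x
    using perm_stabiliser_preserves_support[OF Q supp] permutes_in_image[OF QI] by auto
  show "(\<lambda>x. if x \<in> u \<inter> I then Q x else x) permutes (u \<inter> I)"
    by (rule permutes_restrict_invariant[OF _ QI]) (use I inv in auto)
  show "(\<lambda>x. if x \<in> I - u then Q x else x) permutes (I - u)"
    by (rule permutes_restrict_invariant[OF _ QI]) (use I inv in auto)
qed

lemma comp_in_perm_stabiliser: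
  fixes k :: "'a \<Rightarrow> 'b::zero"
  assumes P1: "P1 permutes (u \<inter> I)" "\<forall>j\<in>u. k (P1 j) = k j" and P2: "P2 permutes (I - u)"
    and supp: "\<And>j. k j \<noteq> 0 \<longleftrightarrow> j \<in> u"
  shows "P1 \<circ> P2 \<in> perm_stabiliser I k"
proof -
  have "k (P1 (P2 x)) = k x" for x
  proof (cases "x \<in> I - u")
    case True
    then have "P2 x \<in> I - u" using permutes_in_image[OF P2] by simp
    then show ?thesis using True permutes_not_in[OF P1(1)] supp[of x] supp[of "P2 x"] by auto
  next
    case False
    then have "P2 x = x" using permutes_not_in[OF P2] by blast
    then show ?thesis using P1 permutes_not_in[OF P1(1)] by (cases "x \<in> u") auto
  qed
  then show ?thesis
    using P1 P2 by (auto simp: perm_stabiliser_def fun_eq_iff intro: permutes_compose permutes_subset)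
qed

text \<open>A permutation fixing a vector splits into a permutation of its support and an
  arbitrary permutation of its zero coordinates.\<close>

lemma card_perm_stabiliser_support:
  fixes k :: "'a \<Rightarrow> 'b::zero"
  assumes I: "finite I" and supp: "\<And>j. k j \<noteq> 0 \<longleftrightarrow> j \<in> u"
  shows "card (perm_stabiliser I k) =
    card {P. P permutes (u \<inter> I) \<and> (\<forall>j\<in>u. k (P j) = k j)} * fact (card I - card (I \<inter> u))"
proof -
  define St where "St = {P. P permutes (u \<inter> I) \<and> (\<forall>j\<in>u. k (P j) = k j)}"
  define Pm where "Pm = {P. P permutes (I - u)}"
  define split :: "('a \<Rightarrow> 'a) \<Rightarrow> ('a \<Rightarrow> 'a) \<times> ('a \<Rightarrow> 'a)" where
    "split Q = ((\<lambda>x. if x \<in> u \<inter> I then Q x else x), (\<lambda>x. if x \<in> I - u then Q x else x))" for Q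
  have "bij_betw split (perm_stabiliser I k) (St \<times> Pm)"
  proof (rule bij_betwI[where g="\<lambda>(P1, P2). P1 \<circ> P2"])
    show "split \<in> perm_stabiliser I k \<rightarrow> St \<times> Pm"
      using perm_stabiliser_restrict_support[OF I _ supp]
      by (auto simp: split_def St_def Pm_def perm_stabiliser_def fun_eq_iff)
    show "(\<lambda>(P1, P2). P1 \<circ> P2) \<in> St \<times> Pm \<rightarrow> perm_stabiliser I k"
      using comp_in_perm_stabiliser[OF _ _ _ supp] by (auto simp: St_def Pm_def)
    show "(case split Q of (P1, P2) \<Rightarrow> P1 \<circ> P2) = Q" if "Q \<in> perm_stabiliser I k" for Q
      using perm_stabiliser_preserves_support[OF that supp] permutes_not_in[of Q I] that
      by (auto simp: split_def perm_stabiliser_def fun_eq_iff)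
    show "split (case P of (P1, P2) \<Rightarrow> P1 \<circ> P2) = P" if PSP: "P \<in> St \<times> Pm" for P
    proof -
      obtain P1 P2 where P: "P = (P1, P2)" and P1: "P1 permutes (u \<inter> I)" and P2: "P2 permutes (I - u)"
        using PSP by (auto simp: St_def Pm_def)
      have "P1 (P2 x) = P2 x" if "x \<in> I - u" for x
        using permutes_in_image[OF P2, of x] permutes_not_in[OF P1, of "P2 x"] that by auto
      then show ?thesis
        using P1 P2 by (auto simp: P split_def fun_eq_iff permutes_not_in)
    qed
  qed
  moreover have "card Pm = fact (card I - card (I \<inter> u))"
    unfolding Pm_def using I by (simp add: card_permutations card_Diff_subset_Int)
  ultimately show ?thesis
    using bij_betw_same_card by (fastforce simp: St_def card_cartesian_product)
qed

lemma sum_nonempty_subsets_by_Max: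
  fixes f :: "nat set \<Rightarrow> 'a::comm_monoid_add"
  shows "(\<Sum>u | u \<subseteq> {1..d} \<and> u \<noteq> {}. f u) = (\<Sum>l=1..d. \<Sum>u | u \<subseteq> {1..l} \<and> l \<in> u. f u)"
proof -
  let ?U = "{u. u \<subseteq> {1..d} \<and> u \<noteq> {}}"
  have fin: "finite ?U" by (rule finite_subset[of _ "Pow {1..d}"]) auto
  have Max_in: "Max u \<in> u" if "u \<in> ?U" for u
    using that by (intro Max_in) (auto intro: finite_subset)
  have fibre: "{u \<in> ?U. Max u = l} = {u. u \<subseteq> {1..l} \<and> l \<in> u}" if "l \<in> {1..d}" for l
  proof (intro set_eqI iffI)
    fix u assume "u \<in> {u \<in> ?U. Max u = l}"
    moreover from this have "finite u" by (auto intro: finite_subset)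
    ultimately show "u \<in> {u. u \<subseteq> {1..l} \<and> l \<in> u}"
      using Max_in[of u] Max_ge[of u] by fastforce
  next
    fix u assume u: "u \<in> {u. u \<subseteq> {1..l} \<and> l \<in> u}"
    then have "finite u" by (auto intro: finite_subset)
    then show "u \<in> {u \<in> ?U. Max u = l}"
      using u that by (auto intro!: Max_eqI)
  qed
  have "(\<Sum>u\<in>?U. f u) = (\<Sum>l\<in>{1..d}. \<Sum>u\<in>{u \<in> ?U. Max u = l}. f u)"
    by (rule sum.group[OF fin finite_atLeastAtMost, symmetric]) (use Max_in in auto)
  also have "\<dots> = (\<Sum>l=1..d. \<Sum>u | u \<subseteq> {1..l} \<and> l \<in> u. f u)"
    by (rule sum.cong[OF refl]) (simp only: fibre)
  finally show ?thesis .
qed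

section \<open>The weighted Korobov space\<close>

locale fourier_weights =
  fixes R :: "real \<Rightarrow> real" and \<alpha> \<beta>0 \<beta>1 :: real and d :: nat
  assumes R_pos: "\<And>x. x \<ge> 1 \<Longrightarrow> R x > 0"
    and summable_R: "summable (\<lambda>m::nat. R (real (Suc m)) powr (- 2 * \<alpha>))"
    and beta0: "\<beta>0 > 0" and beta1: "\<beta>1 > 0"
begin

abbreviation weight :: "(nat \<Rightarrow> int) \<Rightarrow> real" where
  "weight \<equiv> r_ab R \<alpha> \<beta>0 \<beta>1 {1..d}"

definition inv_weight1 :: "int \<Rightarrow> real" where
  "inv_weight1 m = (if m = 0 then \<beta>0 else \<beta>1 * R (real_of_int \<bar>m\<bar>) powr (- 2 * \<alpha>))"

lemma R_abs_pos: "m \<noteq> 0 \<Longrightarrow> R (real_of_int \<bar>m\<bar>) > 0"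
  by (rule R_pos) linarith

lemma inv_weight1_pos: "inv_weight1 m > 0"
  using beta0 beta1 R_abs_pos[of m] by (cases "m = 0") (simp_all add: inv_weight1_def)

lemma inverse_r_ab: "inverse (r_ab R \<alpha> \<beta>0 \<beta>1 u k) = (\<Prod>l\<in>u. inv_weight1 (k l))"
  unfolding r_ab_def prod_inversef[symmetric]
  by (intro prod.cong refl) (simp add: inv_weight1_def powr_minus divide_inverse)

lemma r_ab_pos: "r_ab R \<alpha> \<beta>0 \<beta>1 u k > 0"
proof -
  have "inverse (r_ab R \<alpha> \<beta>0 \<beta>1 u k) > 0"
    unfolding inverse_r_ab by (intro prod_pos inv_weight1_pos)
  then show ?thesis by simp
qed

lemma summable_inv_weight1: "inv_weight1 summable_on UNIV"
proof -
  have R_sum: "(\<lambda>i::nat. \<beta>1 * R (real (Suc i)) powr (- 2 * \<alpha>)) summable_on UNIV"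
    using summable_R by (intro summable_on_cmult_right) (auto simp: summable_on_UNIV_nonneg_real_iff)
  have "bij_betw (\<lambda>i::nat. int (Suc i)) UNIV {m. m > 0}"
    by (rule bij_betwI[where g="\<lambda>m. nat m - 1"]) auto
  moreover have "bij_betw (\<lambda>i::nat. - int (Suc i)) UNIV {m. m < 0}"
    by (rule bij_betwI[where g="\<lambda>m. nat (-m) - 1"]) auto
  moreover have "inv_weight1 (int (Suc i)) = \<beta>1 * R (real (Suc i)) powr (- 2 * \<alpha>)"
    "inv_weight1 (- int (Suc i)) = \<beta>1 * R (real (Suc i)) powr (- 2 * \<alpha>)" for i
    by (simp_all add: inv_weight1_def add.commute)
  ultimately have "inv_weight1 summable_on {m. m > 0}" "inv_weight1 summable_on {m. m < 0}"
    using R_sum summable_on_reindex_bij_betw by fastforce+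
  then have "inv_weight1 summable_on ({m. m > 0} \<union> {m. m < 0} \<union> {0})"
    by (intro summable_on_Un_disjoint) auto
  moreover have "{m. m > 0} \<union> {m. m < 0} \<union> {0::int} = UNIV" by auto
  ultimately show ?thesis by simp
qed

lemma summable_inv_weight: "(\<lambda>k. 1 / weight k) summable_on Zd d"
proof -
  let ?ext = "\<lambda>g j. if j \<in> {1..d} then g j else (0::int)"
  define G where "G g = (\<Prod>j\<in>{1..d}. inv_weight1 (g j))" for g
  have "G summable_on PiE {1..d} (\<lambda>_. UNIV)"
  proof (rule ccontr)
    assume "\<not> ?thesis"
    then have "infsum G (PiE {1..d} (\<lambda>_. UNIV)) = 0" by (rule infsum_not_exists)
    moreover have "infsum G (PiE {1..d} (\<lambda>_. UNIV)) = (\<Prod>j\<in>{1..d}. infsum inv_weight1 UNIV)"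
      unfolding G_def
      by (rule infsum_prod_PiE_abs) (use summable_inv_weight1 inv_weight1_pos in \<open>auto simp: less_imp_le\<close>)
    moreover have "infsum inv_weight1 UNIV > 0"
    proof -
      have "infsum inv_weight1 {0} \<le> infsum inv_weight1 UNIV"
        by (rule infsum_mono_neutral) (use summable_inv_weight1 inv_weight1_pos in \<open>auto simp: less_imp_le\<close>)
      then show ?thesis using inv_weight1_pos[of 0] by simp
    qed
    ultimately show False by simp
  qed
  moreover have "1 / weight (?ext g) = G g" for g
    unfolding G_def inverse_eq_divide[symmetric] inverse_r_ab by simp
  ultimately show ?thesis
    using summable_on_reindex_bij_betw[OF bij_betw_extend_Zd] by fastforce
qed

lemma has_sum_Fspace:
  "f \<in> Fspace R \<alpha> \<beta>0 \<beta>1 d \<Longrightarrow> x \<in> space (cube d) \<Longrightarrow>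
    ((\<lambda>k. fourier_coeff d f k * fourier_char d k x) has_sum f x) (Zd d)"
  unfolding Fspace_def fourier_char_def by auto

lemma summable_Fspace_sq:
  "f \<in> Fspace R \<alpha> \<beta>0 \<beta>1 d \<Longrightarrow> (\<lambda>k. (cmod (fourier_coeff d f k))^2 * weight k) summable_on Zd d"
  unfolding Fspace_def by auto

lemma abs_summable_fourier_coeff:
  "f \<in> Fspace R \<alpha> \<beta>0 \<beta>1 d \<Longrightarrow> (\<lambda>k. norm (fourier_coeff d f k)) summable_on Zd d"
  by (rule abs_summable_of_weighted_square[OF r_ab_pos summable_Fspace_sq summable_inv_weight])

lemma
  assumes as: "(\<lambda>k. norm (a k)) summable_on Zd d"
    and sq: "(\<lambda>k. (cmod (a k))^2 * weight k) summable_on Zd d"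
  shows fourier_series_in_Fspace: "fourier_series d a \<in> Fspace R \<alpha> \<beta>0 \<beta>1 d"
    and Fnorm_fourier_series:
      "Fnorm R \<alpha> \<beta>0 \<beta>1 d (fourier_series d a) = sqrt (infsum (\<lambda>k. (cmod (a k))^2 * weight k) (Zd d))"
proof -
  have coeff: "fourier_coeff d (fourier_series d a) k = a k" if "k \<in> Zd d" for k
    using fourier_coeff_fourier_series[OF as that] .
  interpret prob_space "cube d" unfolding cube_eq_unit_cube by (rule prob_space_unit_cube) simp
  have int: "integrable (cube d) (fourier_series d a)"
    unfolding cube_eq_unit_cube by (rule integrable_fourier_series[OF as]) simp
  have "integrable (cube d) (\<lambda>x. (cmod (fourier_series d a x))^2)"
  proof (rule integrable_const_bound[where B="(infsum (\<lambda>k. norm (a k)) (Zd d))^2"])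
    show "AE x in cube d. norm ((cmod (fourier_series d a x))\<^sup>2) \<le> (infsum (\<lambda>k. norm (a k)) (Zd d))^2"
      using norm_fourier_series_le[OF as] by (auto intro!: power_mono)
  qed (use int in auto)
  moreover have "((\<lambda>k. fourier_coeff d (fourier_series d a) k * fourier_char d k x)
      has_sum fourier_series d a x) (Zd d)" for x
  proof -
    have "((\<lambda>k. a k * fourier_char d k x) has_sum fourier_series d a x) (Zd d)"
      unfolding fourier_series_def by (rule has_sum_infsum[OF fourier_series_summable[OF as]])
    then show ?thesis by (rule has_sum_cong[THEN iffD1, rotated]) (simp add: coeff)
  qed
  ultimately show "fourier_series d a \<in> Fspace R \<alpha> \<beta>0 \<beta>1 d"
    unfolding Fspace_def fourier_char_def[symmetric]
    using int sq by (auto simp: coeff cong: summable_on_cong)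
  show "Fnorm R \<alpha> \<beta>0 \<beta>1 d (fourier_series d a) = sqrt (infsum (\<lambda>k. (cmod (a k))^2 * weight k) (Zd d))"
    unfolding Fnorm_def by (simp add: coeff cong: infsum_cong)
qed

end

section \<open>The cubature error of a shifted lattice rule\<close>

locale lattice_setting = fourier_weights +
  fixes n :: nat and z :: "nat \<Rightarrow> int" and I :: "nat set"
  assumes n_pos: "n > 0" and I_subset: "I \<subseteq> {1..d}"
begin

definition dual_nonzero :: "(nat \<Rightarrow> int) set" where
  "dual_nonzero = {k \<in> Zd d. k \<noteq> (\<lambda>_. 0) \<and> in_dual n z {1..d} k}"

definition cubature_error :: "((nat \<Rightarrow> real) \<Rightarrow> complex) \<Rightarrow> (nat \<Rightarrow> real) \<Rightarrow> complex" where
  "cubature_error f \<Delta> = (LINT x|cube d. f x) - lattice_rule d n z \<Delta> f"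

definition lattice_point :: "(nat \<Rightarrow> real) \<Rightarrow> nat \<Rightarrow> nat \<Rightarrow> real" where
  "lattice_point \<Delta> j = restrict (\<lambda>i. frac (real j * real_of_int (z i) / real n + \<Delta> i)) {1..d}"

lemma lattice_point_in_cube: "lattice_point \<Delta> j \<in> space (cube d)"
  by (auto simp: lattice_point_def cube_eq_unit_cube space_unit_cube frac_lt_1 less_imp_le)

lemma fourier_char_lattice_point:
  "fourier_char d k (lattice_point \<Delta> j) =
    exp (2 * of_real pi * \<i> * of_real (real j * real_of_int (\<Sum>i\<in>{1..d}. k i * z i) / real n)) *
    fourier_char d k \<Delta>"
proof -
  define A where "A = real j * real_of_int (\<Sum>i\<in>{1..d}. k i * z i) / real n"
  define N where "N = (\<Sum>i\<in>{1..d}. k i * \<lfloor>real j * real_of_int (z i) / real n + \<Delta> i\<rfloor>)"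
  have "dotp d k (lattice_point \<Delta> j) = A + dotp d k \<Delta> - real_of_int N"
    by (simp add: dotp_def lattice_point_def A_def N_def frac_def algebra_simps sum_subtractf
        sum.distrib sum_divide_distrib sum_distrib_left)
  moreover have "exp (2 * of_real pi * \<i> * of_int N) = 1"
    unfolding exp_eq_1 by (auto intro!: exI[of _ N])
  ultimately show ?thesis
    unfolding fourier_char_def A_def[symmetric]
    by (simp add: distrib_left right_diff_distrib exp_add exp_diff)
qed

lemma has_sum_lattice_rule:
  assumes f: "f \<in> Fspace R \<alpha> \<beta>0 \<beta>1 d"
  shows "((\<lambda>k. fourier_coeff d f k * fourier_char d k \<Delta> * (if in_dual n z {1..d} k then 1 else 0))
    has_sum lattice_rule d n z \<Delta> f) (Zd d)"
proof -
  define c where "c k = fourier_coeff d f k * fourier_char d k \<Delta>" for k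
  define E where "E j k = exp (2 * of_real pi * \<i> *
    of_real (real j * real_of_int (\<Sum>i\<in>{1..d}. k i * z i) / real n))" for j k
  have "((\<lambda>k. c k * E j k) has_sum f (lattice_point \<Delta> j)) (Zd d)" for j
    using has_sum_Fspace[OF f lattice_point_in_cube]
    by (simp add: fourier_char_lattice_point c_def E_def mult_ac)
  then have "((\<lambda>k. \<Sum>j<n. c k * E j k) has_sum (\<Sum>j<n. f (lattice_point \<Delta> j))) (Zd d)"
    by (intro has_sum_sum) auto
  then have "((\<lambda>k. of_real (1 / real n) * (\<Sum>j<n. c k * E j k))
      has_sum lattice_rule d n z \<Delta> f) (Zd d)"
    unfolding lattice_rule_def lattice_point_def by (rule has_sum_cmult_right)
  moreover have "of_real (1 / real n) * (\<Sum>j<n. c k * E j k) =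
      c k * (if in_dual n z {1..d} k then 1 else 0)" for k
  proof -
    have "(\<Sum>j<n. E j k) = (if int n dvd (\<Sum>i\<in>{1..d}. k i * z i) then of_nat n else 0)"
      unfolding E_def by (rule sum_roots_of_unity_powers[OF n_pos])
    then show ?thesis
      using n_pos by (simp add: in_dual_def sum_distrib_left[symmetric])
  qed
  ultimately show ?thesis by (simp add: c_def)
qed

lemma cubature_error_fourier:
  assumes f: "f \<in> Fspace R \<alpha> \<beta>0 \<beta>1 d"
  shows "cubature_error f \<Delta> = - infsum (\<lambda>k. fourier_coeff d f k * fourier_char d k \<Delta>) dual_nonzero"
proof -
  define g where
    "g k = fourier_coeff d f k * fourier_char d k \<Delta> * (if in_dual n z {1..d} k then 1 else 0)" for k
  have gs: "g summable_on Zd d"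
    unfolding g_def by (rule has_sum_imp_summable[OF has_sum_lattice_rule[OF f]])
  have "Zd d = insert (\<lambda>_. 0) (Zd d - {\<lambda>_. 0})" by (auto simp: Zd_def)
  then have "infsum g (Zd d) = g (\<lambda>_. 0) + infsum g (Zd d - {\<lambda>_. 0})"
    using summable_on_subset_banach[OF gs] by (metis Diff_iff Diff_subset infsum_insert singletonI)
  moreover have "g (\<lambda>_. 0) = (LINT x|cube d. f x)"
    by (simp add: g_def fourier_char_zero in_dual_def fourier_coeff_def dotp_def)
  moreover have "infsum g (Zd d - {\<lambda>_. 0}) =
      infsum (\<lambda>k. fourier_coeff d f k * fourier_char d k \<Delta>) dual_nonzero"
    by (rule infsum_cong_neutral) (auto simp: g_def dual_nonzero_def)
  moreover have "lattice_rule d n z \<Delta> f = infsum g (Zd d)"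
    unfolding g_def by (rule infsumI[OF has_sum_lattice_rule[OF f], symmetric])
  ultimately show ?thesis by (simp add: cubature_error_def)
qed

definition sym_group :: "(nat \<Rightarrow> nat) set" where
  "sym_group = {P. P permutes I}"

lemma finite_I: "finite I"
  using I_subset finite_subset by blast

lemma finite_sym_group: "finite sym_group"
  unfolding sym_group_def by (rule finite_permutations[OF finite_I])

lemma card_sym_group: "card sym_group = fact (card I)"
  unfolding sym_group_def by (rule card_permutations[OF refl finite_I])

lemma sym_group_permutes: "P \<in> sym_group \<Longrightarrow> P permutes {1..d}"
  unfolding sym_group_def using I_subset permutes_subset by blast

lemma bij_betw_sym_group_mult:
  assumes Q: "Q \<in> sym_group"
  shows "bij_betw (\<lambda>P. Q \<circ> P) sym_group sym_group"
proof (rule bij_betwI[where g="\<lambda>P. inv Q \<circ> P"])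
  have Q': "Q permutes I" "inv Q permutes I" using Q permutes_inv by (auto simp: sym_group_def)
  then show "(\<lambda>P. Q \<circ> P) \<in> sym_group \<rightarrow> sym_group" "(\<lambda>P. inv Q \<circ> P) \<in> sym_group \<rightarrow> sym_group"
    by (auto simp: sym_group_def intro: permutes_compose)
  show "inv Q \<circ> (Q \<circ> P) = P" "Q \<circ> (inv Q \<circ> P) = P" for P
    using permutes_inv_o[OF Q'(1)] by (simp_all add: o_assoc)
qed

lemma Sym_space_subset_Fspace: "Sym_space R \<alpha> \<beta>0 \<beta>1 d I \<subseteq> Fspace R \<alpha> \<beta>0 \<beta>1 d"
  unfolding Sym_space_def by blast

lemma fourier_coeff_Sym_space_comp:
  assumes f: "f \<in> Sym_space R \<alpha> \<beta>0 \<beta>1 d I" and P: "P \<in> sym_group"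
  shows "fourier_coeff d f (k \<circ> P) = fourier_coeff d f k"
  using f P by (intro fourier_coeff_comp_permutes sym_group_permutes)
    (auto simp: Sym_space_def Fspace_def sym_group_def)

definition dual_char :: "(nat \<Rightarrow> int) \<Rightarrow> (nat \<Rightarrow> real) \<Rightarrow> complex" where
  "dual_char k \<Delta> = (if k \<in> dual_nonzero then fourier_char d k \<Delta> else 0)"

definition sym_dual_char :: "(nat \<Rightarrow> int) \<Rightarrow> (nat \<Rightarrow> real) \<Rightarrow> complex" where
  "sym_dual_char k \<Delta> = (\<Sum>P\<in>sym_group. dual_char (k \<circ> P) \<Delta>) / of_nat (card sym_group)"

lemma norm_dual_char_le: "norm (dual_char k \<Delta>) \<le> 1"
  by (simp add: dual_char_def)

lemma norm_sym_dual_char_le: "norm (sym_dual_char k \<Delta>) \<le> 1"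
proof -
  have "norm (\<Sum>P\<in>sym_group. dual_char (k \<circ> P) \<Delta>) \<le> (\<Sum>P\<in>sym_group. norm (dual_char (k \<circ> P) \<Delta>))"
    by (rule norm_sum)
  also have "\<dots> \<le> (\<Sum>P\<in>sym_group. 1)"
    by (intro sum_mono norm_dual_char_le)
  finally show ?thesis by (simp add: sym_dual_char_def norm_divide card_sym_group)
qed

lemma sym_dual_char_comp:
  assumes "Q \<in> sym_group"
  shows "sym_dual_char (k \<circ> Q) \<Delta> = sym_dual_char k \<Delta>"
  unfolding sym_dual_char_def o_assoc[symmetric]
  using sum.reindex_bij_betw[OF bij_betw_sym_group_mult[OF assms], of "\<lambda>P. dual_char (k \<circ> P) \<Delta>"]
  by simp

text \<open>Averaging over the symmetry group moves the permutation invariance of the Fourier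
  coefficients of f onto the dual characters.\<close>

lemma has_sum_sym_dual_char:
  assumes f: "f \<in> Sym_space R \<alpha> \<beta>0 \<beta>1 d I"
  shows "((\<lambda>k. fourier_coeff d f k * sym_dual_char k \<Delta>) has_sum
    infsum (\<lambda>k. fourier_coeff d f k * fourier_char d k \<Delta>) dual_nonzero) (Zd d)"
proof -
  let ?c = "fourier_coeff d f"
  define S where "S = infsum (\<lambda>k. ?c k * fourier_char d k \<Delta>) dual_nonzero"
  have "f \<in> Fspace R \<alpha> \<beta>0 \<beta>1 d" using f Sym_space_subset_Fspace by blast
  then have "(\<lambda>k. norm (?c k)) summable_on dual_nonzero"
    by (rule summable_on_subset_banach[OF abs_summable_fourier_coeff]) (auto simp: dual_nonzero_def)
  then have "(\<lambda>k. norm (?c k * fourier_char d k \<Delta>)) summable_on dual_nonzero"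
    by (simp add: norm_mult)
  then have "(\<lambda>k. ?c k * fourier_char d k \<Delta>) summable_on dual_nonzero"
    by (rule abs_summable_summable)
  then have "((\<lambda>k. ?c k * fourier_char d k \<Delta>) has_sum S) dual_nonzero"
    unfolding S_def by (rule has_sum_infsum)
  moreover have "((\<lambda>k. ?c k * dual_char k \<Delta>) has_sum S) (Zd d) \<longleftrightarrow>
      ((\<lambda>k. ?c k * fourier_char d k \<Delta>) has_sum S) dual_nonzero"
    by (rule has_sum_cong_neutral) (auto simp: dual_char_def dual_nonzero_def)
  ultimately have dual: "((\<lambda>k. ?c k * dual_char k \<Delta>) has_sum S) (Zd d)"
    by blast
  have "((\<lambda>k. ?c k * dual_char (k \<circ> P) \<Delta>) has_sum S) (Zd d)" if P: "P \<in> sym_group" for P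
  proof -
    have "((\<lambda>k. ?c (k \<circ> P) * dual_char (k \<circ> P) \<Delta>) has_sum S) (Zd d)"
      using has_sum_reindex_bij_betw[OF bij_betw_comp_permutes_Zd[OF sym_group_permutes[OF P]],
          where f="\<lambda>k. ?c k * dual_char k \<Delta>"] dual by simp
    then show ?thesis by (simp add: fourier_coeff_Sym_space_comp[OF f P])
  qed
  then have "((\<lambda>k. \<Sum>P\<in>sym_group. ?c k * dual_char (k \<circ> P) \<Delta>) has_sum (\<Sum>P\<in>sym_group. S)) (Zd d)"
    by (intro has_sum_sum finite_sym_group)
  from has_sum_divide_const[OF this, of "of_nat (card sym_group)"] show ?thesis
    by (simp add: sym_dual_char_def sum_distrib_left[symmetric] card_sym_group S_def)
qed

lemma cubature_error_sym:
  assumes "f \<in> Sym_space R \<alpha> \<beta>0 \<beta>1 d I"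
  shows "cubature_error f \<Delta> = - infsum (\<lambda>k. fourier_coeff d f k * sym_dual_char k \<Delta>) (Zd d)"
  using assms Sym_space_subset_Fspace
  by (simp only: cubature_error_fourier infsumI[OF has_sum_sym_dual_char[OF assms]] subset_iff)

definition wce_sq :: "(nat \<Rightarrow> real) \<Rightarrow> real" where
  "wce_sq \<Delta> = infsum (\<lambda>k. (cmod (sym_dual_char k \<Delta>))^2 / weight k) (Zd d)"

lemma summable_wce_sq: "(\<lambda>k. (cmod (sym_dual_char k \<Delta>))^2 / weight k) summable_on Zd d"
proof (rule summable_on_comparison_test[OF summable_inv_weight])
  fix k
  have "(cmod (sym_dual_char k \<Delta>))^2 \<le> 1"
    using norm_sym_dual_char_le by (simp add: power_le_one)
  then show "(cmod (sym_dual_char k \<Delta>))^2 / weight k \<le> 1 / weight k"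
    using r_ab_pos[of "{1..d}" k] by (intro divide_right_mono) auto
qed (simp add: r_ab_pos less_imp_le)

lemma wce_sq_nonneg: "wce_sq \<Delta> \<ge> 0"
  unfolding wce_sq_def by (intro infsum_nonneg) (simp add: r_ab_pos less_imp_le)

lemma norm_cubature_error_le:
  assumes f: "f \<in> Sym_space R \<alpha> \<beta>0 \<beta>1 d I" and f1: "Fnorm R \<alpha> \<beta>0 \<beta>1 d f \<le> 1"
  shows "cmod (cubature_error f \<Delta>) \<le> sqrt (wce_sq \<Delta>)"
proof -
  have fF: "f \<in> Fspace R \<alpha> \<beta>0 \<beta>1 d" using f Sym_space_subset_Fspace by blast
  have "infsum (\<lambda>k. (cmod (fourier_coeff d f k))^2 * weight k) (Zd d) \<le> 1"
    using f1 by (simp add: Fnorm_def)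
  from weighted_cauchy_schwarz_infsum[OF r_ab_pos summable_Fspace_sq[OF fF] this summable_wce_sq]
  show ?thesis by (simp add: cubature_error_sym[OF f] wce_sq_def)
qed

text \<open>The bound is attained by a multiple of the representer of the error functional, whose
  Fourier coefficients are the conjugate symmetrised dual characters divided by the weights.\<close>

definition extremal_coeff :: "real \<Rightarrow> (nat \<Rightarrow> real) \<Rightarrow> (nat \<Rightarrow> int) \<Rightarrow> complex" where
  "extremal_coeff s \<Delta> k = cnj (sym_dual_char k \<Delta>) / of_real (weight k * s)"

lemma
  assumes s: "s > 0"
  shows abs_summable_extremal_coeff: "(\<lambda>k. norm (extremal_coeff s \<Delta> k)) summable_on Zd d"
    and has_sum_extremal_coeff_sq:
      "((\<lambda>k. (cmod (extremal_coeff s \<Delta> k))^2 * weight k) has_sum wce_sq \<Delta> / s^2) (Zd d)"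
proof -
  have norm: "norm (extremal_coeff s \<Delta> k) = cmod (sym_dual_char k \<Delta>) / weight k / s" for k
    using r_ab_pos[of "{1..d}" k] s by (simp add: extremal_coeff_def norm_divide norm_mult)
  show "(\<lambda>k. norm (extremal_coeff s \<Delta> k)) summable_on Zd d"
  proof (rule summable_on_comparison_test[OF summable_on_divide_const[OF summable_inv_weight]])
    show "norm (extremal_coeff s \<Delta> k) \<le> 1 / weight k / s" for k
      unfolding norm using norm_sym_dual_char_le[of k \<Delta>] r_ab_pos[of "{1..d}" k] s
      by (simp add: divide_right_mono)
  qed simp
  have "(cmod (extremal_coeff s \<Delta> k))^2 * weight k = (cmod (sym_dual_char k \<Delta>))^2 / weight k / s^2" for k
    using r_ab_pos[of "{1..d}" k] by (simp add: norm power_divide power2_eq_square)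
  then show "((\<lambda>k. (cmod (extremal_coeff s \<Delta> k))^2 * weight k) has_sum wce_sq \<Delta> / s^2) (Zd d)"
    unfolding wce_sq_def using has_sum_divide_const[OF has_sum_infsum[OF summable_wce_sq]] by simp
qed

lemma extremal_in_Sym_space:
  assumes s: "s > 0"
  shows "fourier_series d (extremal_coeff s \<Delta>) \<in> Sym_space R \<alpha> \<beta>0 \<beta>1 d I"
    and "Fnorm R \<alpha> \<beta>0 \<beta>1 d (fourier_series d (extremal_coeff s \<Delta>)) = sqrt (wce_sq \<Delta> / s^2)"
proof -
  note coeff = abs_summable_extremal_coeff[OF s] has_sum_imp_summable[OF has_sum_extremal_coeff_sq[OF s]]
  have "fourier_series d (extremal_coeff s \<Delta>) (\<lambda>i. x (P i)) = fourier_series d (extremal_coeff s \<Delta>) x"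
    if "P permutes I" for x P
  proof -
    have P: "P \<in> sym_group" using that by (simp add: sym_group_def)
    have "extremal_coeff s \<Delta> (k \<circ> P) = extremal_coeff s \<Delta> k" for k
      unfolding extremal_coeff_def sym_dual_char_comp[OF P] r_ab_comp_permutes[OF sym_group_permutes[OF P]] ..
    then show ?thesis by (intro fourier_series_comp_permutes sym_group_permutes[OF P])
  qed
  then show "fourier_series d (extremal_coeff s \<Delta>) \<in> Sym_space R \<alpha> \<beta>0 \<beta>1 d I"
    using fourier_series_in_Fspace[OF coeff] by (simp add: Sym_space_def)
  show "Fnorm R \<alpha> \<beta>0 \<beta>1 d (fourier_series d (extremal_coeff s \<Delta>)) = sqrt (wce_sq \<Delta> / s^2)"
    using Fnorm_fourier_series[OF coeff] infsumI[OF has_sum_extremal_coeff_sq[OF s]] by simp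
qed

lemma cubature_error_extremal:
  assumes s: "s > 0"
  shows "cubature_error (fourier_series d (extremal_coeff s \<Delta>)) \<Delta> = - of_real (wce_sq \<Delta> / s)"
proof -
  have "extremal_coeff s \<Delta> k * sym_dual_char k \<Delta> = of_real ((cmod (sym_dual_char k \<Delta>))^2 / weight k / s)" for k
    by (simp add: extremal_coeff_def complex_norm_square[symmetric] mult.commute)
  then have "cubature_error (fourier_series d (extremal_coeff s \<Delta>)) \<Delta> =
      - infsum (\<lambda>k. of_real ((cmod (sym_dual_char k \<Delta>))^2 / weight k / s)) (Zd d)"
    using cubature_error_sym[OF extremal_in_Sym_space(1)[OF s]]
      fourier_coeff_fourier_series[OF abs_summable_extremal_coeff[OF s]]
    by (simp cong: infsum_cong)
  also have "\<dots> = - of_real (wce_sq \<Delta> / s)"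
  proof -
    have "((\<lambda>k. (cmod (sym_dual_char k \<Delta>))^2 / weight k / s) has_sum (wce_sq \<Delta> / s)) (Zd d)"
      unfolding wce_sq_def by (rule has_sum_divide_const[OF has_sum_infsum[OF summable_wce_sq]])
    then show ?thesis by (intro arg_cong[where f=uminus] infsumI has_sum_of_real)
  qed
  finally show ?thesis .
qed

lemma zero_in_Sym_space: "(\<lambda>_. 0) \<in> Sym_space R \<alpha> \<beta>0 \<beta>1 d I"
  and Fnorm_zero: "Fnorm R \<alpha> \<beta>0 \<beta>1 d (\<lambda>_. 0) = 0"
proof -
  have "fourier_series d (\<lambda>_. 0) = (\<lambda>_. 0)" by (simp add: fourier_series_def[abs_def])
  then show "(\<lambda>_. 0) \<in> Sym_space R \<alpha> \<beta>0 \<beta>1 d I" "Fnorm R \<alpha> \<beta>0 \<beta>1 d (\<lambda>_. 0) = 0"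
    using fourier_series_in_Fspace[of "\<lambda>_. 0"] Fnorm_fourier_series[of "\<lambda>_. 0"]
    by (simp_all add: Sym_space_def)
qed

lemma worst_case_attained:
  obtains g where "g \<in> Sym_space R \<alpha> \<beta>0 \<beta>1 d I" "Fnorm R \<alpha> \<beta>0 \<beta>1 d g \<le> 1"
    "cmod (cubature_error g \<Delta>) = sqrt (wce_sq \<Delta>)"
proof (cases "wce_sq \<Delta> = 0")
  case True
  have "cubature_error (\<lambda>_. 0) \<Delta> = 0" by (simp add: cubature_error_def lattice_rule_def)
  then show ?thesis using that zero_in_Sym_space Fnorm_zero True by simp
next
  case False
  define s where "s = sqrt (wce_sq \<Delta>)"
  have s: "s > 0" "s^2 = wce_sq \<Delta>" using False wce_sq_nonneg[of \<Delta>] by (simp_all add: s_def)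
  note g = extremal_in_Sym_space[OF s(1), where \<Delta>=\<Delta>] cubature_error_extremal[OF s(1), where \<Delta>=\<Delta>]
  show ?thesis
  proof (rule that[OF g(1)])
    show "Fnorm R \<alpha> \<beta>0 \<beta>1 d (fourier_series d (extremal_coeff s \<Delta>)) \<le> 1"
      using g(2) s by simp
    have "wce_sq \<Delta> / s = s"
      using s by (metis power2_eq_square nonzero_mult_div_cancel_right less_irrefl)
    then show "cmod (cubature_error (fourier_series d (extremal_coeff s \<Delta>)) \<Delta>) = sqrt (wce_sq \<Delta>)"
      using g(3) s by (simp add: s_def norm_divide)
  qed
qed

lemma wce_eq_sqrt_wce_sq: "wce R \<alpha> \<beta>0 \<beta>1 d I n z \<Delta> = sqrt (wce_sq \<Delta>)"
  unfolding wce_def cubature_error_def[symmetric]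
proof (rule cSup_eq_maximum)
  obtain g where "g \<in> Sym_space R \<alpha> \<beta>0 \<beta>1 d I" "Fnorm R \<alpha> \<beta>0 \<beta>1 d g \<le> 1"
    "cmod (cubature_error g \<Delta>) = sqrt (wce_sq \<Delta>)"
    by (rule worst_case_attained)
  then show "sqrt (wce_sq \<Delta>) \<in> (\<lambda>f. cmod (cubature_error f \<Delta>)) `
      {f \<in> Sym_space R \<alpha> \<beta>0 \<beta>1 d I. Fnorm R \<alpha> \<beta>0 \<beta>1 d f \<le> 1}"
    by (intro image_eqI[where x=g]) auto
qed (auto intro: norm_cubature_error_le)

lemma dual_char_measurable [measurable]: "dual_char k \<in> borel_measurable (shift_cube d)"
  by (cases "k \<in> dual_nonzero") (simp_all add: dual_char_def[abs_def] shift_cube_eq_unit_cube)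

lemma cnj_dual_char_measurable [measurable]:
  "(\<lambda>\<Delta>. cnj (dual_char k \<Delta>)) \<in> borel_measurable (shift_cube d)"
  by (cases "k \<in> dual_nonzero") (simp_all add: dual_char_def shift_cube_eq_unit_cube)

lemma integral_dual_char_mult_cnj:
  assumes "k \<in> Zd d" "k' \<in> Zd d"
  shows "(LINT \<Delta>|shift_cube d. dual_char k \<Delta> * cnj (dual_char k' \<Delta>)) =
    (if k \<in> dual_nonzero \<and> k' = k then 1 else 0)"
  using fourier_char_orthonormal[OF _ assms, of "{0..<1}"]
  by (cases "k \<in> dual_nonzero"; cases "k' \<in> dual_nonzero")
     (auto simp: dual_char_def shift_cube_eq_unit_cube)

lemma integral_sq_sym_dual_char:
  assumes k: "k \<in> Zd d"
  shows "(LINT \<Delta>|shift_cube d. (cmod (sym_dual_char k \<Delta>))^2) =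
    (\<Sum>P\<in>sym_group. if k \<circ> P \<in> dual_nonzero then real (card (perm_stabiliser I k)) else 0) /
      (card sym_group)^2"
proof -
  interpret prob_space "shift_cube d"
    unfolding shift_cube_eq_unit_cube by (rule prob_space_unit_cube) simp
  let ?N = "of_nat (card sym_group) :: complex"
  have sq: "complex_of_real ((cmod (sym_dual_char k \<Delta>))^2) =
      (\<Sum>P\<in>sym_group. \<Sum>Q\<in>sym_group. dual_char (k \<circ> P) \<Delta> * cnj (dual_char (k \<circ> Q) \<Delta>)) / ?N^2"
    for \<Delta>
    unfolding complex_norm_square sym_dual_char_def
    by (simp add: sum_product power2_eq_square cnj_sum)
  have int: "integrable (shift_cube d) (\<lambda>\<Delta>. dual_char k' \<Delta> * cnj (dual_char k'' \<Delta>))" for k' k''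
    by (rule integrable_const_bound[where B=1])
       (auto simp: norm_mult intro!: mult_le_one norm_dual_char_le)
  have coset: "(\<Sum>Q\<in>sym_group. if k \<circ> P \<in> dual_nonzero \<and> k \<circ> Q = k \<circ> P then 1 else 0) =
      (if k \<circ> P \<in> dual_nonzero then of_nat (card (perm_stabiliser I k)) else (0::complex))"
    if "P \<in> sym_group" for P
  proof -
    have "(\<Sum>Q\<in>sym_group. if k \<circ> Q = k \<circ> P then 1 else 0) =
        (\<Sum>Q\<in>{Q \<in> sym_group. k \<circ> Q = k \<circ> P}. 1 :: complex)"
      by (rule sum.inter_filter[OF finite_sym_group, symmetric])
    also have "\<dots> = of_nat (card (perm_stabiliser I k))"
      using card_perm_coset[of P I k] that by (simp add: sym_group_def)
    finally show ?thesis by simp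
  qed
  have orth: "(LINT \<Delta>|shift_cube d. dual_char (k \<circ> P) \<Delta> * cnj (dual_char (k \<circ> Q) \<Delta>)) =
      (if k \<circ> P \<in> dual_nonzero \<and> k \<circ> Q = k \<circ> P then 1 else 0)"
    if "P \<in> sym_group" "Q \<in> sym_group" for P Q
    using integral_dual_char_mult_cnj[OF Zd_comp_permutes[OF k sym_group_permutes[OF that(1)]]
        Zd_comp_permutes[OF k sym_group_permutes[OF that(2)]]] by auto
  have "complex_of_real (LINT \<Delta>|shift_cube d. (cmod (sym_dual_char k \<Delta>))^2) =
      (LINT \<Delta>|shift_cube d. complex_of_real ((cmod (sym_dual_char k \<Delta>))^2))"
    by (rule integral_complex_of_real[symmetric])
  also have "\<dots> = (\<Sum>P\<in>sym_group. \<Sum>Q\<in>sym_group.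
      LINT \<Delta>|shift_cube d. dual_char (k \<circ> P) \<Delta> * cnj (dual_char (k \<circ> Q) \<Delta>)) / ?N^2"
    unfolding sq using int by (simp add: integral_sum integrable_sum)
  also have "\<dots> = (\<Sum>P\<in>sym_group. if k \<circ> P \<in> dual_nonzero then of_nat (card (perm_stabiliser I k)) else 0) / ?N^2"
    by (simp add: orth coset cong: sum.cong)
  also have "\<dots> = complex_of_real ((\<Sum>P\<in>sym_group.
      if k \<circ> P \<in> dual_nonzero then real (card (perm_stabiliser I k)) else 0) / (card sym_group)^2)"
    by (simp add: if_distrib[where f=complex_of_real] cong: if_cong)
  finally show ?thesis by (simp only: of_real_eq_iff)
qed

lemma sym_dual_char_measurable [measurable]:
  "(\<lambda>\<Delta>. sym_dual_char k \<Delta>) \<in> borel_measurable (shift_cube d)"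
  unfolding sym_dual_char_def by measurable

lemma rms_wce_sq:
  "(rms_wce R \<alpha> \<beta>0 \<beta>1 d I n z)^2 =
    infsum (\<lambda>k. (LINT \<Delta>|shift_cube d. (cmod (sym_dual_char k \<Delta>))^2) / weight k) (Zd d)"
proof -
  interpret prob_space "shift_cube d"
    unfolding shift_cube_eq_unit_cube by (rule prob_space_unit_cube) simp
  have bound: "norm ((cmod (sym_dual_char k \<Delta>))^2 / weight k) \<le> 1 / weight k" for k \<Delta>
    using norm_sym_dual_char_le[of k \<Delta>] r_ab_pos[of "{1..d}" k]
    by (simp add: divide_right_mono power_le_one)
  have "(LINT \<Delta>|shift_cube d. (wce R \<alpha> \<beta>0 \<beta>1 d I n z \<Delta>)^2) = (LINT \<Delta>|shift_cube d. wce_sq \<Delta>)"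
    by (simp add: wce_eq_sqrt_wce_sq wce_sq_nonneg)
  also have "\<dots> = infsum (\<lambda>k. LINT \<Delta>|shift_cube d. (cmod (sym_dual_char k \<Delta>))^2 / weight k) (Zd d)"
    unfolding wce_sq_def
    by (rule integral_infsum[where b="\<lambda>k. 1 / weight k"])
       (use countable_Zd finite_measure_axioms bound summable_inv_weight in auto)
  finally have "(LINT \<Delta>|shift_cube d. (wce R \<alpha> \<beta>0 \<beta>1 d I n z \<Delta>)^2) =
      infsum (\<lambda>k. (LINT \<Delta>|shift_cube d. (cmod (sym_dual_char k \<Delta>))^2) / weight k) (Zd d)"
    by simp
  moreover have "(LINT \<Delta>|shift_cube d. (wce R \<alpha> \<beta>0 \<beta>1 d I n z \<Delta>)^2) \<ge> 0"
    by (rule integral_nonneg_AE) simp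
  ultimately show ?thesis by (simp add: rms_wce_def)
qed

lemma summable_stabiliser_weight:
  "(\<lambda>k. real (card (perm_stabiliser I k)) / weight k) summable_on Zd d"
proof (rule summable_on_comparison_test[OF summable_on_cmult_right[OF summable_inv_weight]])
  fix k :: "nat \<Rightarrow> int"
  have "real (card (perm_stabiliser I k)) \<le> fact (card I)"
    using card_perm_stabiliser_le[OF finite_I, of k] by (metis of_nat_fact of_nat_le_iff)
  then show "real (card (perm_stabiliser I k)) / weight k \<le> fact (card I) * (1 / weight k)"
    using r_ab_pos[of "{1..d}" k] by (simp add: divide_right_mono)
qed (simp add: r_ab_pos less_imp_le)

lemma mean_wce_sq_eq_dual_sum:
  "infsum (\<lambda>k. (LINT \<Delta>|shift_cube d. (cmod (sym_dual_char k \<Delta>))^2) / weight k) (Zd d) =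
    infsum (\<lambda>k. real (card (perm_stabiliser I k)) / weight k) dual_nonzero / card sym_group"
proof -
  define h where
    "h k = (if k \<in> dual_nonzero then real (card (perm_stabiliser I k)) / weight k else 0)" for k
  have "h summable_on Zd d"
    using summable_on_subset_banach[OF summable_stabiliser_weight, of dual_nonzero]
    by (subst summable_on_cong_neutral[where T=dual_nonzero]) (auto simp: h_def dual_nonzero_def)
  then have "((\<lambda>k. h (k \<circ> P)) has_sum infsum h (Zd d)) (Zd d)" if "P \<in> sym_group" for P
    using has_sum_reindex_bij_betw[OF bij_betw_comp_permutes_Zd[OF sym_group_permutes[OF that]], of h]
    by (simp add: has_sum_infsum)
  then have "((\<lambda>k. \<Sum>P\<in>sym_group. h (k \<circ> P)) has_sum (\<Sum>P\<in>sym_group. infsum h (Zd d))) (Zd d)"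
    by (intro has_sum_sum finite_sym_group)
  from has_sum_divide_const[OF this, where c="(card sym_group)^2"]
  have "((\<lambda>k. (\<Sum>P\<in>sym_group. h (k \<circ> P)) / (card sym_group)^2) has_sum
      infsum h (Zd d) / card sym_group) (Zd d)"
    by (simp add: power2_eq_square card_sym_group)
  moreover have "h (k \<circ> P) = (if k \<circ> P \<in> dual_nonzero then real (card (perm_stabiliser I k)) else 0) / weight k"
    if "P \<in> sym_group" for P k
    using that card_perm_stabiliser_comp[of P I k] r_ab_comp_permutes[OF sym_group_permutes[OF that], of R \<alpha> \<beta>0 \<beta>1 k]
    by (simp add: h_def sym_group_def)
  moreover have "infsum h (Zd d) = infsum (\<lambda>k. real (card (perm_stabiliser I k)) / weight k) dual_nonzero"
    by (rule infsum_cong_neutral) (auto simp: h_def dual_nonzero_def)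
  ultimately show ?thesis
    by (auto simp: integral_sq_sym_dual_char sum_divide_distrib[symmetric] infsumI mult.commute
        cong: sum.cong infsum_cong)
qed

definition dual_support :: "nat set \<Rightarrow> (nat \<Rightarrow> int) set" where
  "dual_support u = {h \<in> nonzero_vecs u. in_dual n z u h}"

lemma in_dual_nonzero_vecs:
  assumes "u \<subseteq> {1..d}" "h \<in> nonzero_vecs u"
  shows "in_dual n z {1..d} h = in_dual n z u h"
proof -
  have "(\<Sum>j\<in>{1..d}. h j * z j) = (\<Sum>j\<in>u. h j * z j)"
    by (rule sum.mono_neutral_right) (use assms in \<open>auto simp: nonzero_vecs_def\<close>)
  then show ?thesis by (simp add: in_dual_def)
qed

lemma dual_nonzero_eq_Union:
  "dual_nonzero = (\<Union>u\<in>{u. u \<subseteq> {1..d} \<and> u \<noteq> {}}. dual_support u)"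
proof (intro set_eqI iffI)
  fix k assume k: "k \<in> dual_nonzero"
  define u where "u = {j. k j \<noteq> 0}"
  have "u \<subseteq> {1..d}" "u \<noteq> {}" "k \<in> nonzero_vecs u"
    using k by (auto simp: u_def dual_nonzero_def Zd_def nonzero_vecs_def fun_eq_iff)
  then show "k \<in> (\<Union>u\<in>{u. u \<subseteq> {1..d} \<and> u \<noteq> {}}. dual_support u)"
    using k in_dual_nonzero_vecs by (auto simp: dual_support_def dual_nonzero_def)
next
  fix k assume "k \<in> (\<Union>u\<in>{u. u \<subseteq> {1..d} \<and> u \<noteq> {}}. dual_support u)"
  then obtain u where "u \<subseteq> {1..d}" "u \<noteq> {}" "k \<in> nonzero_vecs u" "in_dual n z u k"
    by (auto simp: dual_support_def)
  then show "k \<in> dual_nonzero"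
    using in_dual_nonzero_vecs by (auto simp: dual_nonzero_def Zd_def nonzero_vecs_def fun_eq_iff)
qed

lemma dual_support_disjoint: "u \<noteq> u' \<Longrightarrow> dual_support u \<inter> dual_support u' = {}"
  by (auto simp: dual_support_def nonzero_vecs_def)

lemma inverse_weight_nonzero_vecs:
  assumes u: "u \<subseteq> {1..d}" and h: "h \<in> nonzero_vecs u"
  shows "inverse (weight h) = \<beta>0 ^ (d - card u) * inverse (r_ab R \<alpha> \<beta>0 \<beta>1 u h)"
proof -
  have "finite u" using u finite_subset by blast
  have "inverse (weight h) = (\<Prod>j\<in>{1..d} - u. inv_weight1 (h j)) * (\<Prod>j\<in>u. inv_weight1 (h j))"
    unfolding inverse_r_ab by (rule prod.subset_diff[OF u]) simp
  also have "(\<Prod>j\<in>{1..d} - u. inv_weight1 (h j)) = \<beta>0 ^ (d - card u)"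
    using h u \<open>finite u\<close> by (simp add: nonzero_vecs_def inv_weight1_def card_Diff_subset)
  finally show ?thesis by (simp add: inverse_r_ab)
qed

lemma dual_term_eq:
  assumes u: "u \<subseteq> {1..d}" and h: "h \<in> nonzero_vecs u"
  shows "real (card (perm_stabiliser I h)) / weight h / card sym_group =
    \<beta>0 ^ d * (inverse (c_uI \<beta>0 u I) *
      (real (Mfact u I h) / real (card (Sperm u I)) * inverse (r_ab R \<alpha> \<beta>0 \<beta>1 u h)))"
proof -
  have fu: "finite u" using u finite_subset by blast
  define m where "m = card I"
  define a where "a = card (I \<inter> u)"
  have am: "a \<le> m" unfolding a_def m_def by (rule card_mono[OF finite_I]) auto
  have stab: "card (perm_stabiliser I h) = Mfact u I h * fact (m - a)"
    using card_perm_stabiliser_support[OF finite_I, of h u] h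
    by (auto simp: nonzero_vecs_def Mfact_def Sperm_def m_def a_def)
  have Sperm: "card (Sperm u I) = fact a"
    unfolding Sperm_def a_def using fu by (simp add: card_permutations Int_commute)
  have sym: "real (card sym_group) = real (fact a) * real (fact (m - a)) * real (m choose a)"
    using binomial_fact_lemma[OF am] by (metis card_sym_group m_def of_nat_mult)
  have pow: "\<beta>0 ^ d = \<beta>0 ^ (d - card u) * \<beta>0 ^ card u"
    using card_mono[OF _ u] by (simp add: power_add[symmetric])
  have pos: "real (m choose a) > 0" "r_ab R \<alpha> \<beta>0 \<beta>1 u h > 0" "\<beta>0 > 0" "real (fact (m - a)) > 0"
    using am r_ab_pos beta0 by auto
  have "real (card (perm_stabiliser I h)) / weight h / card sym_group =
      real (Mfact u I h) * real (fact (m - a)) * (\<beta>0 ^ (d - card u) * inverse (r_ab R \<alpha> \<beta>0 \<beta>1 u h)) /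
        (real (fact a) * real (fact (m - a)) * real (m choose a))"
    unfolding stab sym inverse_weight_nonzero_vecs[OF u h, symmetric] by (simp add: divide_inverse)
  also have "\<dots> = \<beta>0 ^ d * (inverse (c_uI \<beta>0 u I) *
      (real (Mfact u I h) / real (card (Sperm u I)) * inverse (r_ab R \<alpha> \<beta>0 \<beta>1 u h)))"
    unfolding pow Sperm c_uI_def using pos by (simp add: m_def a_def field_simps)
  finally show ?thesis .
qed

lemma dual_sum_eq_B_terms:
  "infsum (\<lambda>k. real (card (perm_stabiliser I k)) / weight k) dual_nonzero / card sym_group =
    \<beta>0 ^ d * (\<Sum>l=1..d. B_term R \<alpha> \<beta>0 \<beta>1 I n l z)"
proof -
  let ?U = "{u. u \<subseteq> {1..d} \<and> u \<noteq> {}}"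
  define f where "f k = real (card (perm_stabiliser I k)) / weight k / card sym_group" for k
  define B where "B u = inverse (c_uI \<beta>0 u I) *
    (\<Sum>\<^sub>\<infinity>h\<in>nonzero_vecs u. real (Mfact u I h) / real (card (Sperm u I)) *
      inverse (r_ab R \<alpha> \<beta>0 \<beta>1 u h) * (if in_dual n z u h then 1 else 0))" for u
  have fs: "f summable_on dual_nonzero"
    unfolding f_def
    by (intro summable_on_divide_const summable_on_subset_banach[OF summable_stabiliser_weight])
       (auto simp: dual_nonzero_def)
  have block: "infsum f (dual_support u) = \<beta>0 ^ d * B u" if "u \<in> ?U" for u
  proof -
    have "f h = \<beta>0 ^ d * (inverse (c_uI \<beta>0 u I) *
        (real (Mfact u I h) / real (card (Sperm u I)) * inverse (r_ab R \<alpha> \<beta>0 \<beta>1 u h) *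
          (if in_dual n z u h then 1 else 0)))" if "h \<in> dual_support u" for h
      using dual_term_eq[of u h] \<open>u \<in> ?U\<close> that by (simp add: f_def dual_support_def)
    then have "infsum f (dual_support u) = infsum (\<lambda>h. \<beta>0 ^ d * (inverse (c_uI \<beta>0 u I) *
        (real (Mfact u I h) / real (card (Sperm u I)) * inverse (r_ab R \<alpha> \<beta>0 \<beta>1 u h) *
          (if in_dual n z u h then 1 else 0)))) (nonzero_vecs u)"
      by (intro infsum_cong_neutral) (auto simp: dual_support_def)
    then show ?thesis by (simp only: B_def infsum_cmult_right')
  qed
  have "infsum (\<lambda>k. real (card (perm_stabiliser I k)) / weight k) dual_nonzero / card sym_group =
      infsum f dual_nonzero"
    unfolding f_def
    by (rule infsum_divide_const[symmetric], rule summable_on_subset_banach[OF summable_stabiliser_weight])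
       (auto simp: dual_nonzero_def)
  also have "\<dots> = (\<Sum>u\<in>?U. infsum f (dual_support u))"
  proof -
    have "finite ?U" by (rule finite_subset[of _ "Pow {1..d}"]) auto
    moreover have "f summable_on dual_support u" if "u \<in> ?U" for u
      using that dual_nonzero_eq_Union by (intro summable_on_subset_banach[OF fs]) blast
    ultimately show ?thesis
      unfolding dual_nonzero_eq_Union using dual_support_disjoint
      by (intro sum_infsum[symmetric]) blast+
  qed
  also have "\<dots> = \<beta>0 ^ d * (\<Sum>u\<in>?U. B u)"
    by (simp only: block sum_distrib_left cong: sum.cong)
  also have "\<dots> = \<beta>0 ^ d * (\<Sum>l=1..d. B_term R \<alpha> \<beta>0 \<beta>1 I n l z)"
    by (simp only: sum_nonempty_subsets_by_Max B_term_def B_def)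
  finally show ?thesis .
qed

end

text \<open>The identity does not need the growth condition on R (with c_R), alpha \<ge> 0, d \<ge> 1 or
  the range of z; of the primality of n only n > 0 is used.\<close>

theorem proposition4p4:
  fixes R :: "real \<Rightarrow> real" and \<alpha> \<beta>0 \<beta>1 c_R :: real
    and d n :: nat and I :: "nat set" and z :: "nat \<Rightarrow> int"
  assumes R_pos: "\<forall>x::real. x \<ge> 1 \<longrightarrow> R x > 0"
    and cR: "c_R \<ge> 1"
    and R_scale: "\<forall>k m :: nat. k \<ge> 1 \<longrightarrow> m \<ge> 1 \<longrightarrow>
                    R (real m) / c_R \<le> R (real (k * m)) / real k \<and>
                    R (real (k * m)) / real k \<le> R (real m)"
    and alpha: "\<alpha> \<ge> 0"
    and muR: "summable (\<lambda>m::nat. R (real (Suc m)) powr (- 2 * \<alpha>))"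
    and beta0: "\<beta>0 > 0" and beta1: "\<beta>1 > 0"
    and d: "d \<ge> 1"
    and I: "I \<subseteq> {1..d}"
    and n: "prime n"
    and z: "\<forall>j\<in>{1..d}. z j \<in> {0..<int n}"
  shows "(rms_wce R \<alpha> \<beta>0 \<beta>1 d I n z)^2 =
           \<beta>0 ^ d * (\<Sum>l=1..d. B_term R \<alpha> \<beta>0 \<beta>1 I n l z)"
proof -
  interpret lattice_setting R \<alpha> \<beta>0 \<beta>1 d n z I
    using R_pos muR beta0 beta1 prime_gt_0_nat[OF n] I by unfold_locales auto
  have "(rms_wce R \<alpha> \<beta>0 \<beta>1 d I n z)^2 =
      infsum (\<lambda>k. (LINT \<Delta>|shift_cube d. (cmod (sym_dual_char k \<Delta>))^2) / weight k) (Zd d)"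
    by (rule rms_wce_sq)
  also have "\<dots> = infsum (\<lambda>k. real (card (perm_stabiliser I k)) / weight k) dual_nonzero / card sym_group"
    by (rule mean_wce_sq_eq_dual_sum)
  also have "\<dots> = \<beta>0 ^ d * (\<Sum>l=1..d. B_term R \<alpha> \<beta>0 \<beta>1 I n l z)"
    by (rule dual_sum_eq_B_terms)
  finally show ?thesis .
qed

end
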